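(* Let $(\psi,v)$ be a (sufficiently smooth) solution of $$-i\gamma^\mu\partial_\mu\psi=v\psi,\qquad -\Box v+v=\psi^*\gamma^0\psi\quad\text{on }[0,\infty)\times\mathbb{R}^2,$$ and let $\Psi$ solve $-\Box\Psi=i\gamma^\mu\partial_\mu\psi$ on $[0,\infty)\times\mathbb{R}^2$ with $(\Psi,\partial_t\Psi)|_{t=0}=(0,i\gamma^0\psi(0,\cdot))$ (so that $-i\gamma^\mu\partial_\mu\Psi=\psi$). Then: (i) with $\widetilde\psi=\psi+i\gamma^\mu\partial_\mu(v\psi)$, one has $-i\gamma^\mu\partial_\mu\widetilde\psi=\mathcal{N}_1(\psi,v)+\mathcal{N}_2(\psi,\psi^* )+2Q_0(\psi,v)$; (ii) with $\widetilde\Psi=\Psi-v\psi$, one has $-\Box\widetilde\Psi=-\mathcal{N}_1(\psi,v)-\mathcal{N}_2(\psi,\psi^* )-2Q_0(\psi,v)$; (iii) with $\tilde v=v-\psi^*\gamma^0\psi$, one has $-\Box\tilde v+\tilde v=\mathcal{N}_3(\psi,v)+\mathcal{N}_4(\psi,\psi^* )$; (iv) for every $I\in\mathbb{N}^6$, $\big[\widehat\Gamma^I\psi\big]_-=-i\big(I_2-\omega_a\gamma^0\gamma^a\big)\gamma^bG_b\widehat\Gamma^I\Psi$.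
   Context: Coordinates $(t,x)=(x_0,x_1,x_2)$, $r=|x|$, $\omega_a=x_a/r$, summation over repeated indices (Greek in $\{0,1,2\}$, Latin in $\{1,2\}$), $\eta=\mathrm{diag}(-1,1,1)$, $\Box=\eta^{\alpha\beta}\partial_\alpha\partial_\beta$, $\partial^\alpha=\eta^{\alpha\beta}\partial_\beta$. Dirac matrices: $\gamma^0=\begin{pmatrix}1&0\\0&-1\end{pmatrix}$, $\gamma^1=\begin{pmatrix}0&1\\-1&0\end{pmatrix}$, $\gamma^2=\begin{pmatrix}0&-i\\-i&0\end{pmatrix}$; $A^*$ is the conjugate transpose; $I_2$ the identity. Null form: $Q_0(f,g)=\partial_tf\,\partial_tg-\partial_af\,\partial_ag$. Nonlinearities: $\mathcal{N}_1(\psi,v)=i\,v\gamma^\mu\partial_\mu(v\psi)$, $\mathcal{N}_2(\psi,\psi^* )=(\psi^*\gamma^0\psi)\psi$, $\mathcal{N}_3(\psi,v)=i\,\partial_\mu(v\psi^* )\gamma^0\gamma^\mu\psi-i\,\psi^*\gamma^0\gamma^\mu\partial_\mu(v\psi)$, $\mathcal{N}_4(\psi,\psi^* )=2\eta^{\alpha\beta}\partial_\alpha\psi^*\gamma^0\partial_\beta\psi$. For $\phi:\mathbb{R}^{1+2}\to\mathbb{C}^2$, $[\phi]_-=\phi-\omega_a\gamma^0\gamma^a\phi$. Good derivatives $G_a=\partial_a+\omega_a\partial_t$. Modified vector fields: $\widehat\Omega=x_1\partial_2-x_2\partial_1-\tfrac12\gamma^1\gamma^2$, $\widehat L_a=t\partial_a+x_a\partial_t-\tfrac12\gamma^0\gamma^a$;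 $(\widehat\Gamma_1,\dots,\widehat\Gamma_6)=(\partial_t,\partial_1,\partial_2,\widehat\Omega,\widehat L_1,\widehat L_2)$, $\widehat\Gamma^I=\prod_k\widehat\Gamma_k^{i_k}$ for $I=(i_1,\dots,i_6)$. *)

theory Defs
  imports "HOL-Analysis.Analysis"
begin

text \<open>Spacetime points p = (t, x1, x2) :: real \<times> real \<times> real.
  Spinors take values in complex^2, 2x2 complex matrices are complex^2^2.\<close>

type_synonym pt = "real \<times> real \<times> real"
type_synonym spinor = "complex ^ 2"
type_synonym cmat = "complex ^ 2 ^ 2"

definition Hs :: "pt set" where
  "Hs = {p. fst p \<ge> 0}"

definition coord :: "nat \<Rightarrow> pt \<Rightarrow> real" where
  "coord \<mu> p = (if \<mu> = 0 then fst p else if \<mu> = 1 then fst (snd p) else snd (snd p))"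

definition dir :: "nat \<Rightarrow> pt" where
  "dir \<mu> = (if \<mu> = 0 then (1,0,0) else if \<mu> = 1 then (0,1,0) else (0,0,1))"

definition rad :: "pt \<Rightarrow> real" where
  "rad p = sqrt ((coord 1 p)\<^sup>2 + (coord 2 p)\<^sup>2)"

definition omega :: "nat \<Rightarrow> pt \<Rightarrow> real" where
  "omega a p = coord a p / rad p"

text \<open>Partial derivative \<partial>_\<mu> on the half space (one-sided in t at t = 0).\<close>
definition pd :: "nat \<Rightarrow> (pt \<Rightarrow> 'b::real_normed_vector) \<Rightarrow> pt \<Rightarrow> 'b" where
  "pd \<mu> f p = vector_derivative (\<lambda>s. f (p + s *\<^sub>R dir \<mu>))
                 (at 0 within {s. p + s *\<^sub>R dir \<mu> \<in> Hs})"

fun pds :: "nat list \<Rightarrow> (pt \<Rightarrow> 'b::real_normed_vector) \<Rightarrow> pt \<Rightarrow> 'b" where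
  "pds [] f = f"
| "pds (\<mu> # ds) f = pd \<mu> (pds ds f)"

definition smooth_H :: "(pt \<Rightarrow> 'b::real_normed_vector) \<Rightarrow> bool" where
  "smooth_H f \<longleftrightarrow> (\<forall>ds. set ds \<subseteq> {0,1,2} \<longrightarrow> pds ds f differentiable_on Hs)"

definition eta :: "nat \<Rightarrow> nat \<Rightarrow> real" where
  "eta \<alpha> \<beta> = (if \<alpha> \<noteq> \<beta> then 0 else if \<alpha> = 0 then -1 else 1)"

definition Box :: "(pt \<Rightarrow> 'b::real_normed_vector) \<Rightarrow> pt \<Rightarrow> 'b" where
  "Box f p = (\<Sum>\<alpha><3. \<Sum>\<beta><3. eta \<alpha> \<beta> *\<^sub>R pd \<alpha> (pd \<beta> f) p)"

definition gam :: "nat \<Rightarrow> cmat" where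
  "gam \<mu> = (if \<mu> = 0 then vector [vector [1, 0], vector [0, -1]]
            else if \<mu> = 1 then vector [vector [0, 1], vector [-1, 0]]
            else vector [vector [0, -\<i>], vector [-\<i>, 0]])"

definition hdot :: "spinor \<Rightarrow> spinor \<Rightarrow> complex" where
  "hdot u w = (\<Sum>j\<in>UNIV. cnj (u $ j) * w $ j)"

definition dirac :: "(pt \<Rightarrow> spinor) \<Rightarrow> pt \<Rightarrow> spinor" where
  "dirac f p = (\<Sum>\<mu><3. gam \<mu> *v pd \<mu> f p)"

definition smul :: "(pt \<Rightarrow> real) \<Rightarrow> (pt \<Rightarrow> spinor) \<Rightarrow> pt \<Rightarrow> spinor" where
  "smul v f = (\<lambda>p. v p *\<^sub>R f p)"

definition Q0 :: "(pt \<Rightarrow> spinor) \<Rightarrow> (pt \<Rightarrow> real) \<Rightarrow> pt \<Rightarrow> spinor" where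
  "Q0 f g p = pd 0 g p *\<^sub>R pd 0 f p - (\<Sum>a\<in>{1,2}. pd a g p *\<^sub>R pd a f p)"

definition N1 :: "(pt \<Rightarrow> spinor) \<Rightarrow> (pt \<Rightarrow> real) \<Rightarrow> pt \<Rightarrow> spinor" where
  "N1 \<psi> v p = \<i> *s (v p *\<^sub>R dirac (smul v \<psi>) p)"

definition N2 :: "(pt \<Rightarrow> spinor) \<Rightarrow> pt \<Rightarrow> spinor" where
  "N2 \<psi> p = hdot (\<psi> p) (gam 0 *v \<psi> p) *s \<psi> p"

text \<open>Note \<partial>_\<mu>(v \<psi>^*) = (\<partial>_\<mu>(v \<psi>))^*, so \<partial>_\<mu>(v\<psi>^*) M \<psi> = hdot (\<partial>_\<mu>(v\<psi>)) (M \<psi>).\<close>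
definition N3 :: "(pt \<Rightarrow> spinor) \<Rightarrow> (pt \<Rightarrow> real) \<Rightarrow> pt \<Rightarrow> complex" where
  "N3 \<psi> v p = (\<Sum>\<mu><3. \<i> * hdot (pd \<mu> (smul v \<psi>) p) ((gam 0 ** gam \<mu>) *v \<psi> p)
                     - \<i> * hdot (\<psi> p) ((gam 0 ** gam \<mu>) *v pd \<mu> (smul v \<psi>) p))"

definition N4 :: "(pt \<Rightarrow> spinor) \<Rightarrow> pt \<Rightarrow> complex" where
  "N4 \<psi> p = 2 * (\<Sum>\<alpha><3. \<Sum>\<beta><3. of_real (eta \<alpha> \<beta>) * hdot (pd \<alpha> \<psi> p) (gam 0 *v pd \<beta> \<psi> p))"

definition minus_part :: "(pt \<Rightarrow> spinor) \<Rightarrow> pt \<Rightarrow> spinor" where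
  "minus_part \<phi> p = \<phi> p - (\<Sum>a\<in>{1,2}. omega a p *\<^sub>R ((gam 0 ** gam a) *v \<phi> p))"

definition Gd :: "nat \<Rightarrow> (pt \<Rightarrow> spinor) \<Rightarrow> pt \<Rightarrow> spinor" where
  "Gd a f p = pd a f p + omega a p *\<^sub>R pd 0 f p"

text \<open>Modified vector fields \<Gamma>_1..\<Gamma>_6 = \<partial>_t, \<partial>_1, \<partial>_2, \<Omega>hat, Lhat_1, Lhat_2.\<close>
definition Gamk :: "nat \<Rightarrow> (pt \<Rightarrow> spinor) \<Rightarrow> pt \<Rightarrow> spinor" where
  "Gamk k f p =
    (if k = 1 then pd 0 f p
     else if k = 2 then pd 1 f p
     else if k = 3 then pd 2 f p
     else if k = 4 then coord 1 p *\<^sub>R pd 2 f p - coord 2 p *\<^sub>R pd 1 f p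
                        - (1/2 :: real) *\<^sub>R ((gam 1 ** gam 2) *v f p)
     else if k = 5 then coord 0 p *\<^sub>R pd 1 f p + coord 1 p *\<^sub>R pd 0 f p
                        - (1/2 :: real) *\<^sub>R ((gam 0 ** gam 1) *v f p)
     else coord 0 p *\<^sub>R pd 2 f p + coord 2 p *\<^sub>R pd 0 f p
                        - (1/2 :: real) *\<^sub>R ((gam 0 ** gam 2) *v f p))"

text \<open>\<Gamma>^I = \<Gamma>_1^{i_1} \<circ> \<Gamma>_2^{i_2} \<circ> ... \<circ> \<Gamma>_6^{i_6}, multi-index I given by I 1, ..., I 6.\<close>
definition GamI :: "(nat \<Rightarrow> nat) \<Rightarrow> (pt \<Rightarrow> spinor) \<Rightarrow> pt \<Rightarrow> spinor" where
  "GamI I = foldr (\<lambda>k g. (Gamk k ^^ I k) \<circ> g) [1..<7] id"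

end

theory Submission
  imports Defs
begin

text \<open>Identities (i)--(iii) are algebra once two facts are available: applying the Dirac operator
  twice gives \<open>-\<box>\<close> (Clifford relations and symmetry of second derivatives), and the Leibniz rule
  for \<open>\<box>\<close> produces the null form \<open>Q\<^sub>0\<close>. For (iv), \<open>\<Phi> = -i\<gamma>\<^sup>\<mu>\<partial>\<^sub>\<mu>\<Psi> - \<psi>\<close> solves the free
  Dirac equation with zero initial data, hence vanishes by an energy estimate on backward light
  cones: the Dirac current \<open>\<psi>\<^sup>*\<gamma>\<^sup>0\<gamma>\<^sup>\<mu>\<psi>\<close> is conserved and causal. So \<open>\<psi> = -i\<gamma>\<^sup>\<mu>\<partial>\<^sub>\<mu>\<Psi>\<close>; the
  modified vector fields commute with the Dirac operator, and since \<open>\<omega>\<close> is a unit vector the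
  projection \<open>[\<cdot>]\<^sub>-\<close> of \<open>\<gamma>\<^sup>\<mu>\<partial>\<^sub>\<mu>\<close> only involves the good derivatives \<open>G\<^sub>b\<close>.\<close>

section \<open>Partial derivatives on the closed half space\<close>

lemma Hs_add_dir: "q \<in> Hs \<Longrightarrow> s \<ge> 0 \<Longrightarrow> q + s *\<^sub>R dir \<mu> \<in> Hs"
  by (simp add: Hs_def dir_def)

lemma trivial_limit_ray_Hs:
  assumes "q \<in> Hs"
  shows "at 0 within {s. q + s *\<^sub>R dir \<mu> \<in> Hs} \<noteq> bot"
proof -
  have "{0..1::real} \<subseteq> {s. q + s *\<^sub>R dir \<mu> \<in> Hs}"
    using Hs_add_dir[OF assms] by auto
  then have "(0::real) islimpt {s. q + s *\<^sub>R dir \<mu> \<in> Hs}"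
    using islimpt_subset[of 0 "{0..1::real}"] by (simp add: islimpt_Icc)
  then show ?thesis by (simp add: trivial_limit_within)
qed

lemma has_vector_derivative_ray:
  assumes "(f has_derivative f') (at (q + s *\<^sub>R dir \<mu>) within Hs)"
    and "\<And>s. s \<in> A \<Longrightarrow> q + s *\<^sub>R dir \<mu> \<in> Hs"
  shows "((\<lambda>s. f (q + s *\<^sub>R dir \<mu>)) has_vector_derivative f' (dir \<mu>)) (at s within A)"
proof -
  have line: "((\<lambda>s. q + s *\<^sub>R dir \<mu>) has_derivative (\<lambda>h. h *\<^sub>R dir \<mu>)) (at s within A)"
    by (auto intro!: derivative_eq_intros)
  have "(\<lambda>s. q + s *\<^sub>R dir \<mu>) ` A \<subseteq> Hs"
    using assms(2) by auto
  from has_derivative_subset[OF assms(1) this]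
  have "(f has_derivative f') (at (q + s *\<^sub>R dir \<mu>) within (\<lambda>s. q + s *\<^sub>R dir \<mu>) ` A)" .
  from diff_chain_within[OF line this]
  have "((\<lambda>s. f (q + s *\<^sub>R dir \<mu>)) has_derivative (\<lambda>h. f' (h *\<^sub>R dir \<mu>))) (at s within A)"
    by (simp add: o_def)
  moreover have "(\<lambda>h. f' (h *\<^sub>R dir \<mu>)) = (\<lambda>h. h *\<^sub>R f' (dir \<mu>))"
    using has_derivative_bounded_linear[OF assms(1)] by (simp add: linear_simps)
  ultimately show ?thesis by (simp add: has_vector_derivative_def)
qed

lemma pd_eqI:
  assumes "q \<in> Hs" and "(f has_derivative f') (at q within Hs)"
  shows "pd \<mu> f q = f' (dir \<mu>)"
proof -
  have "((\<lambda>s. f (q + s *\<^sub>R dir \<mu>)) has_vector_derivative f' (dir \<mu>))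
          (at 0 within {s. q + s *\<^sub>R dir \<mu> \<in> Hs})"
    by (rule has_vector_derivative_ray) (use assms(2) in auto)
  then show ?thesis
    unfolding pd_def by (rule vector_derivative_within[OF trivial_limit_ray_Hs[OF assms(1)]])
qed

lemma has_vector_derivative_pd_ray:
  assumes "f differentiable (at (q + s *\<^sub>R dir \<mu>) within Hs)" and "q + s *\<^sub>R dir \<mu> \<in> Hs"
    and "\<And>s. s \<in> A \<Longrightarrow> q + s *\<^sub>R dir \<mu> \<in> Hs"
  shows "((\<lambda>s. f (q + s *\<^sub>R dir \<mu>)) has_vector_derivative pd \<mu> f (q + s *\<^sub>R dir \<mu>)) (at s within A)"
proof -
  obtain f' where f': "(f has_derivative f') (at (q + s *\<^sub>R dir \<mu>) within Hs)"
    using assms(1) by (auto simp: differentiable_def)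
  show ?thesis
    using has_vector_derivative_ray[OF f' assms(3)] pd_eqI[OF assms(2) f'] by simp
qed

lemma has_vector_derivative_pd_time:
  assumes "f differentiable (at (t, x\<^sub>1, x\<^sub>2) within Hs)" and "t \<ge> 0" and "A \<subseteq> {0..}"
  shows "((\<lambda>t. f (t, x\<^sub>1, x\<^sub>2)) has_vector_derivative pd 0 f (t, x\<^sub>1, x\<^sub>2)) (at t within A)"
  using has_vector_derivative_pd_ray[of f "(0, x\<^sub>1, x\<^sub>2)" t 0 A] assms
  by (auto simp: dir_def Hs_def)

lemma has_vector_derivative_pd_space1:
  assumes "f differentiable (at (t, x\<^sub>1, x\<^sub>2) within Hs)" and "t \<ge> 0"
  shows "((\<lambda>x\<^sub>1. f (t, x\<^sub>1, x\<^sub>2)) has_vector_derivative pd 1 f (t, x\<^sub>1, x\<^sub>2)) (at x\<^sub>1 within A)"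
  using has_vector_derivative_pd_ray[of f "(t, 0, x\<^sub>2)" x\<^sub>1 1 A] assms
  by (simp add: dir_def Hs_def)

lemma has_vector_derivative_pd_space2:
  assumes "f differentiable (at (t, x\<^sub>1, x\<^sub>2) within Hs)" and "t \<ge> 0"
  shows "((\<lambda>x\<^sub>2. f (t, x\<^sub>1, x\<^sub>2)) has_vector_derivative pd 2 f (t, x\<^sub>1, x\<^sub>2)) (at x\<^sub>2 within A)"
  using has_vector_derivative_pd_ray[of f "(t, x\<^sub>1, 0)" x\<^sub>2 2 A] assms
  by (simp add: dir_def Hs_def)

lemma pd_const_on_ray:
  assumes "q \<in> Hs" and "\<And>s. f (q + s *\<^sub>R dir \<mu>) = c"
  shows "pd \<mu> f q = 0"
  using vector_derivative_within[OF trivial_limit_ray_Hs[OF assms(1)] has_vector_derivative_const]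
  by (simp add: pd_def assms(2))

definition eq_on_Hs :: "(pt \<Rightarrow> 'b) \<Rightarrow> (pt \<Rightarrow> 'b) \<Rightarrow> bool" where
  "eq_on_Hs f g \<longleftrightarrow> (\<forall>p\<in>Hs. f p = g p)"

lemma eq_on_Hs_refl [simp]: "eq_on_Hs f f"
  and eq_on_Hs_trans: "eq_on_Hs f g \<Longrightarrow> eq_on_Hs g h \<Longrightarrow> eq_on_Hs f h"
  by (auto simp: eq_on_Hs_def)

lemma pd_cong_Hs:
  assumes "q \<in> Hs" and "eq_on_Hs f g"
  shows "pd \<mu> f q = pd \<mu> g q"
proof -
  let ?S = "{s. q + s *\<^sub>R dir \<mu> \<in> Hs}"
  have S: "0 \<in> ?S" and eq: "\<And>s. s \<in> ?S \<Longrightarrow> f (q + s *\<^sub>R dir \<mu>) = g (q + s *\<^sub>R dir \<mu>)"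
    using assms by (auto simp: eq_on_Hs_def)
  have "((\<lambda>s. f (q + s *\<^sub>R dir \<mu>)) has_vector_derivative D) (at 0 within ?S) \<longleftrightarrow>
        ((\<lambda>s. g (q + s *\<^sub>R dir \<mu>)) has_vector_derivative D) (at 0 within ?S)" for D
    using has_vector_derivative_transform[OF S, of "\<lambda>s. f (q + s *\<^sub>R dir \<mu>)"]
      has_vector_derivative_transform[OF S, of "\<lambda>s. g (q + s *\<^sub>R dir \<mu>)"] eq
    by metis
  then show ?thesis unfolding pd_def vector_derivative_def by simp
qed

lemma eq_on_Hs_pd: "eq_on_Hs f g \<Longrightarrow> eq_on_Hs (pd \<mu> f) (pd \<mu> g)"
  using pd_cong_Hs by (auto simp: eq_on_Hs_def)

lemma differentiable_on_cong_Hs: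
  assumes "f differentiable_on Hs" and "eq_on_Hs f g"
  shows "g differentiable_on Hs"
  unfolding differentiable_on_def
proof
  fix q assume "q \<in> Hs"
  then show "g differentiable (at q within Hs)"
    using assms differentiable_transform_within[OF _ zero_less_one \<open>q \<in> Hs\<close>, of f g]
    by (auto simp: differentiable_on_def eq_on_Hs_def)
qed

lemma pd_bounded_linear:
  fixes L :: "'a::real_normed_vector \<Rightarrow> 'b::real_normed_vector"
  assumes "bounded_linear L" and "q \<in> Hs" and "f differentiable (at q within Hs)"
  shows "pd \<mu> (\<lambda>p. L (f p)) q = L (pd \<mu> f q)"
proof -
  obtain f' where f': "(f has_derivative f') (at q within Hs)"
    using assms(3) by (auto simp: differentiable_def)
  show ?thesis
    using pd_eqI[OF assms(2) bounded_linear.has_derivative[OF assms(1) f']] pd_eqI[OF assms(2) f'] by simp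
qed

lemma pd_bounded_bilinear:
  fixes B :: "'a::real_normed_vector \<Rightarrow> 'b::real_normed_vector \<Rightarrow> 'c::real_normed_vector"
  assumes "bounded_bilinear B" and "q \<in> Hs"
    and "f differentiable (at q within Hs)" and "g differentiable (at q within Hs)"
  shows "pd \<mu> (\<lambda>p. B (f p) (g p)) q = B (pd \<mu> f q) (g q) + B (f q) (pd \<mu> g q)"
proof -
  obtain f' g' where f': "(f has_derivative f') (at q within Hs)"
    and g': "(g has_derivative g') (at q within Hs)"
    using assms(3,4) by (auto simp: differentiable_def)
  show ?thesis
    using pd_eqI[OF assms(2) bounded_bilinear.FDERIV[OF assms(1) f' g']]
      pd_eqI[OF assms(2) f'] pd_eqI[OF assms(2) g'] by (simp add: add.commute)
qed

lemma pd_add: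
  assumes "q \<in> Hs" and "f differentiable (at q within Hs)" and "g differentiable (at q within Hs)"
  shows "pd \<mu> (\<lambda>p. f p + g p) q = pd \<mu> f q + pd \<mu> g q"
proof -
  obtain f' g' where f': "(f has_derivative f') (at q within Hs)"
    and g': "(g has_derivative g') (at q within Hs)"
    using assms(2,3) by (auto simp: differentiable_def)
  show ?thesis
    using pd_eqI[OF assms(1) has_derivative_add[OF f' g']] pd_eqI[OF assms(1) f'] pd_eqI[OF assms(1) g']
    by simp
qed

lemma pd_diff:
  assumes "q \<in> Hs" and "f differentiable (at q within Hs)" and "g differentiable (at q within Hs)"
  shows "pd \<mu> (\<lambda>p. f p - g p) q = pd \<mu> f q - pd \<mu> g q"
proof -
  obtain f' g' where f': "(f has_derivative f') (at q within Hs)"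
    and g': "(g has_derivative g') (at q within Hs)"
    using assms(2,3) by (auto simp: differentiable_def)
  show ?thesis
    using pd_eqI[OF assms(1) has_derivative_diff[OF f' g']] pd_eqI[OF assms(1) f'] pd_eqI[OF assms(1) g']
    by simp
qed

lemma pd_sum:
  fixes g :: "'k \<Rightarrow> pt \<Rightarrow> 'a::real_normed_vector" and L :: "'k \<Rightarrow> 'a \<Rightarrow> 'b::real_normed_vector"
  assumes "q \<in> Hs" and "\<And>k. k \<in> K \<Longrightarrow> g k differentiable (at q within Hs)"
    and "\<And>k. k \<in> K \<Longrightarrow> bounded_linear (L k)"
  shows "pd \<mu> (\<lambda>p. \<Sum>k\<in>K. L k (g k p)) q = (\<Sum>k\<in>K. L k (pd \<mu> (g k) q))"
proof -
  have "\<forall>k\<in>K. \<exists>D. (g k has_derivative D) (at q within Hs)"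
    using assms(2) by (auto simp: differentiable_def)
  then obtain D where D: "\<And>k. k \<in> K \<Longrightarrow> (g k has_derivative D k) (at q within Hs)"
    by metis
  have "((\<lambda>p. \<Sum>k\<in>K. L k (g k p)) has_derivative (\<lambda>h. \<Sum>k\<in>K. L k (D k h))) (at q within Hs)"
    by (rule has_derivative_sum) (use D assms(3) bounded_linear.has_derivative in blast)
  then show ?thesis
    using pd_eqI[OF assms(1)] pd_eqI[OF assms(1) D] by simp
qed

lemma pd_bounded_linear_fun:
  assumes "bounded_linear L" and "q \<in> Hs"
  shows "pd \<mu> L q = L (dir \<mu>)"
  using pd_eqI[OF assms(2) bounded_linear.has_derivative[OF assms(1) has_derivative_ident]] by simp

lemma differentiable_bounded_linear:
  fixes L :: "'a::real_normed_vector \<Rightarrow> 'b::real_normed_vector"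
  assumes "bounded_linear L" and "f differentiable (at q within S)"
  shows "(\<lambda>p. L (f p)) differentiable (at q within S)"
  using assms bounded_linear.has_derivative unfolding differentiable_def by blast

lemma differentiable_bounded_bilinear:
  fixes B :: "'a::real_normed_vector \<Rightarrow> 'b::real_normed_vector \<Rightarrow> 'c::real_normed_vector"
  assumes "bounded_bilinear B"
    and "f differentiable (at q within S)" and "g differentiable (at q within S)"
  shows "(\<lambda>p. B (f p) (g p)) differentiable (at q within S)"
  using assms bounded_bilinear.FDERIV unfolding differentiable_def by blast


section \<open>Smooth functions on the half space\<close>

lemma pds_append: "pds (ds @ [\<mu>]) f = pds ds (pd \<mu> f)"
  by (induction ds) auto

lemma eq_on_Hs_pds: "eq_on_Hs f g \<Longrightarrow> eq_on_Hs (pds ds f) (pds ds g)"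
  by (induction ds) (auto intro: eq_on_Hs_pd)

definition smooth_H_upto :: "nat \<Rightarrow> (pt \<Rightarrow> 'b::real_normed_vector) \<Rightarrow> bool" where
  "smooth_H_upto n f \<longleftrightarrow>
     (\<forall>ds. set ds \<subseteq> {0,1,2} \<longrightarrow> length ds \<le> n \<longrightarrow> pds ds f differentiable_on Hs)"

lemma smooth_H_iff_upto: "smooth_H f \<longleftrightarrow> (\<forall>n. smooth_H_upto n f)"
  unfolding smooth_H_def smooth_H_upto_def by (meson order_refl)

lemma smooth_H_upto_0: "smooth_H_upto 0 f \<longleftrightarrow> f differentiable_on Hs"
  by (simp add: smooth_H_upto_def)

lemma smooth_H_upto_Suc:
  "smooth_H_upto (Suc n) f \<longleftrightarrow> f differentiable_on Hs \<and> (\<forall>\<mu><3. smooth_H_upto n (pd \<mu> f))"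
proof safe
  assume f: "smooth_H_upto (Suc n) f"
  then show "f differentiable_on Hs"
    unfolding smooth_H_upto_def by (metis empty_subsetI le0 list.size(3) pds.simps(1) empty_set)
  fix \<mu> :: nat assume "\<mu> < 3"
  then have "set (ds @ [\<mu>]) \<subseteq> {0,1,2}" if "set ds \<subseteq> {0,1,2}" for ds :: "nat list"
    using that by auto
  with f show "smooth_H_upto n (pd \<mu> f)"
    unfolding smooth_H_upto_def by (metis Suc_le_mono length_append_singleton pds_append)
next
  assume f: "f differentiable_on Hs" and pd: "\<forall>\<mu><3. smooth_H_upto n (pd \<mu> f)"
  show "smooth_H_upto (Suc n) f"
    unfolding smooth_H_upto_def
  proof (intro allI impI)
    fix ds :: "nat list" assume ds: "set ds \<subseteq> {0,1,2}" "length ds \<le> Suc n"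
    show "pds ds f differentiable_on Hs"
    proof (cases ds rule: rev_cases)
      case (snoc ds' \<mu>)
      with ds have "\<mu> < 3" "set ds' \<subseteq> {0,1,2}" "length ds' \<le> n" by auto
      with pd have "pds ds' (pd \<mu> f) differentiable_on Hs"
        unfolding smooth_H_upto_def by blast
      then show ?thesis by (simp add: snoc pds_append)
    qed (simp add: f)
  qed
qed

lemma smooth_H_upto_cong: "smooth_H_upto n f \<Longrightarrow> eq_on_Hs f g \<Longrightarrow> smooth_H_upto n g"
  unfolding smooth_H_upto_def using eq_on_Hs_pds differentiable_on_cong_Hs by blast

lemma differentiable_on_bounded_linear:
  fixes L :: "'a::real_normed_vector \<Rightarrow> 'b::real_normed_vector" and f :: "pt \<Rightarrow> 'a"
  shows "bounded_linear L \<Longrightarrow> f differentiable_on S \<Longrightarrow> (\<lambda>p. L (f p)) differentiable_on S"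
  by (auto simp: differentiable_on_def intro: differentiable_bounded_linear)

lemma differentiable_on_bounded_bilinear:
  fixes B :: "'a::real_normed_vector \<Rightarrow> 'b::real_normed_vector \<Rightarrow> 'c::real_normed_vector"
    and f :: "pt \<Rightarrow> 'a" and g :: "pt \<Rightarrow> 'b"
  shows "bounded_bilinear B \<Longrightarrow> f differentiable_on S \<Longrightarrow> g differentiable_on S
    \<Longrightarrow> (\<lambda>p. B (f p) (g p)) differentiable_on S"
  by (auto simp: differentiable_on_def intro: differentiable_bounded_bilinear)

lemma smooth_H_upto_bounded_linear:
  fixes L :: "'a::real_normed_vector \<Rightarrow> 'b::real_normed_vector"
  assumes "bounded_linear L"
  shows "smooth_H_upto n f \<Longrightarrow> smooth_H_upto n (\<lambda>p. L (f p))"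
proof (induction n arbitrary: f)
  case 0
  then show ?case by (simp add: smooth_H_upto_0 differentiable_on_bounded_linear[OF assms])
next
  case (Suc n)
  then have f: "f differentiable_on Hs" and pd: "\<And>\<mu>. \<mu> < 3 \<Longrightarrow> smooth_H_upto n (pd \<mu> f)"
    by (auto simp: smooth_H_upto_Suc)
  have "eq_on_Hs (\<lambda>p. L (pd \<mu> f p)) (pd \<mu> (\<lambda>p. L (f p)))" for \<mu>
    using f by (auto simp: eq_on_Hs_def differentiable_on_def intro!: pd_bounded_linear[OF assms, symmetric])
  with Suc.IH[OF pd] have "smooth_H_upto n (pd \<mu> (\<lambda>p. L (f p)))" if "\<mu> < 3" for \<mu>
    using smooth_H_upto_cong that by blast
  with f show ?case by (simp add: smooth_H_upto_Suc differentiable_on_bounded_linear[OF assms])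
qed

lemma smooth_H_upto_add:
  "smooth_H_upto n f \<Longrightarrow> smooth_H_upto n g \<Longrightarrow> smooth_H_upto n (\<lambda>p. f p + g p)"
proof (induction n arbitrary: f g)
  case 0
  then show ?case by (simp add: smooth_H_upto_0 differentiable_on_add)
next
  case (Suc n)
  then have d: "f differentiable_on Hs" "g differentiable_on Hs"
    and pd: "\<And>\<mu>. \<mu> < 3 \<Longrightarrow> smooth_H_upto n (pd \<mu> f)" "\<And>\<mu>. \<mu> < 3 \<Longrightarrow> smooth_H_upto n (pd \<mu> g)"
    by (auto simp: smooth_H_upto_Suc)
  have "eq_on_Hs (\<lambda>p. pd \<mu> f p + pd \<mu> g p) (pd \<mu> (\<lambda>p. f p + g p))" for \<mu>
    using d by (auto simp: eq_on_Hs_def differentiable_on_def intro!: pd_add[symmetric])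
  with Suc.IH[OF pd] have "smooth_H_upto n (pd \<mu> (\<lambda>p. f p + g p))" if "\<mu> < 3" for \<mu>
    using smooth_H_upto_cong that by blast
  with d show ?case by (simp add: smooth_H_upto_Suc differentiable_on_add)
qed

lemma smooth_H_upto_bounded_bilinear:
  fixes B :: "'a::real_normed_vector \<Rightarrow> 'b::real_normed_vector \<Rightarrow> 'c::real_normed_vector"
  assumes "bounded_bilinear B"
  shows "smooth_H_upto n f \<Longrightarrow> smooth_H_upto n g \<Longrightarrow> smooth_H_upto n (\<lambda>p. B (f p) (g p))"
proof (induction n arbitrary: f g)
  case 0
  then show ?case by (simp add: smooth_H_upto_0 differentiable_on_bounded_bilinear[OF assms])
next
  case (Suc n)
  then have d: "f differentiable_on Hs" "g differentiable_on Hs"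
    and pd: "\<And>\<mu>. \<mu> < 3 \<Longrightarrow> smooth_H_upto n (pd \<mu> f)" "\<And>\<mu>. \<mu> < 3 \<Longrightarrow> smooth_H_upto n (pd \<mu> g)"
    by (auto simp: smooth_H_upto_Suc)
  have fg: "smooth_H_upto n f" "smooth_H_upto n g"
    using Suc.prems unfolding smooth_H_upto_def by auto
  have "eq_on_Hs (\<lambda>p. B (pd \<mu> f p) (g p) + B (f p) (pd \<mu> g p)) (pd \<mu> (\<lambda>p. B (f p) (g p)))" for \<mu>
    using d by (auto simp: eq_on_Hs_def differentiable_on_def
        intro!: pd_bounded_bilinear[OF assms, symmetric])
  moreover have "smooth_H_upto n (\<lambda>p. B (pd \<mu> f p) (g p) + B (f p) (pd \<mu> g p))" if "\<mu> < 3" for \<mu>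
    using smooth_H_upto_add Suc.IH pd fg that by blast
  ultimately have "smooth_H_upto n (pd \<mu> (\<lambda>p. B (f p) (g p)))" if "\<mu> < 3" for \<mu>
    using smooth_H_upto_cong that by blast
  with d show ?case by (simp add: smooth_H_upto_Suc differentiable_on_bounded_bilinear[OF assms])
qed

lemma smooth_H_upto_const: "smooth_H_upto n (\<lambda>p. c)"
proof (induction n arbitrary: c)
  case (Suc n)
  have "eq_on_Hs (\<lambda>p. 0) (pd \<mu> (\<lambda>p. c))" for \<mu>
    using pd_const_on_ray[where f="\<lambda>p. c" and \<mu>=\<mu>] by (auto simp: eq_on_Hs_def)
  then show ?case using smooth_H_upto_cong[OF Suc.IH[of 0]] by (auto simp: smooth_H_upto_Suc)
qed (simp add: smooth_H_upto_0)

lemma smooth_H_pd: "smooth_H f \<Longrightarrow> \<mu> < 3 \<Longrightarrow> smooth_H (pd \<mu> f)"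
  by (meson smooth_H_iff_upto smooth_H_upto_Suc)

lemma smooth_H_differentiable_on: "smooth_H f \<Longrightarrow> f differentiable_on Hs"
  by (meson smooth_H_iff_upto smooth_H_upto_0)

lemma smooth_H_differentiable: "smooth_H f \<Longrightarrow> q \<in> Hs \<Longrightarrow> f differentiable (at q within Hs)"
  using smooth_H_differentiable_on by (auto simp: differentiable_on_def)

lemma smooth_H_continuous_on: "smooth_H f \<Longrightarrow> continuous_on Hs f"
  using smooth_H_differentiable_on differentiable_imp_continuous_on by blast

lemma smooth_H_bounded_linear:
  "bounded_linear L \<Longrightarrow> smooth_H f \<Longrightarrow> smooth_H (\<lambda>p. L (f p))"
  by (simp add: smooth_H_iff_upto smooth_H_upto_bounded_linear)

lemma smooth_H_bounded_bilinear:
  "bounded_bilinear B \<Longrightarrow> smooth_H f \<Longrightarrow> smooth_H g \<Longrightarrow> smooth_H (\<lambda>p. B (f p) (g p))"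
  by (simp add: smooth_H_iff_upto smooth_H_upto_bounded_bilinear)

lemma smooth_H_add: "smooth_H f \<Longrightarrow> smooth_H g \<Longrightarrow> smooth_H (\<lambda>p. f p + g p)"
  by (simp add: smooth_H_iff_upto smooth_H_upto_add)

lemma smooth_H_const: "smooth_H (\<lambda>p. c)"
  by (simp add: smooth_H_iff_upto smooth_H_upto_const)

lemma smooth_H_diff:
  fixes f g :: "pt \<Rightarrow> 'a::real_normed_vector"
  assumes "smooth_H f" and "smooth_H g"
  shows "smooth_H (\<lambda>p. f p - g p)"
  using smooth_H_add[OF assms(1) smooth_H_bounded_linear[OF bounded_linear_minus[OF bounded_linear_ident] assms(2)]]
  by simp

lemma smooth_H_sum:
  fixes g :: "'k \<Rightarrow> pt \<Rightarrow> 'a::real_normed_vector"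
  shows "(\<And>k. k \<in> K \<Longrightarrow> smooth_H (g k)) \<Longrightarrow> smooth_H (\<lambda>p. \<Sum>k\<in>K. g k p)"
  by (induction K rule: infinite_finite_induct) (auto intro: smooth_H_add smooth_H_const)

lemma smooth_H_bounded_linear_fun:
  assumes "bounded_linear L"
  shows "smooth_H L"
  unfolding smooth_H_iff_upto
proof
  fix n
  have "eq_on_Hs (\<lambda>p. L (dir \<mu>)) (pd \<mu> L)" for \<mu>
    using pd_bounded_linear_fun[OF assms] by (auto simp: eq_on_Hs_def)
  then have "smooth_H_upto m (pd \<mu> L)" for m \<mu>
    using smooth_H_upto_const smooth_H_upto_cong by blast
  then show "smooth_H_upto n L"
    using assms by (cases n) (auto simp: smooth_H_upto_Suc smooth_H_upto_0 bounded_linear_imp_differentiable_on)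
qed


section \<open>Symmetry of second partial derivatives\<close>

lemma continuous_on_slice:
  "continuous_on (S \<times> T) (\<lambda>(x, y). H x y) \<Longrightarrow> x \<in> S \<Longrightarrow> continuous_on T (H x)"
  by (rule continuous_on_compose2[where f="\<lambda>y. (x, y)" and g="\<lambda>(x, y). H x y", simplified])
    (auto intro!: continuous_intros)

lemma trivial_limit_at_0_within_unit: "at (0::real) within {0..1} \<noteq> bot"
  by (simp add: trivial_limit_within islimpt_Icc)

text \<open>Both sides equal \<open>f\<^sub>x 0 y1 - f\<^sub>x 0 0\<close>: the right one by the fundamental theorem of calculus,
  the left one as the \<open>x\<close>-derivative at \<open>0\<close> of \<open>f x y1 - f x 0 = \<integral>\<^sub>0\<^sup>y\<^sup>1 f\<^sub>y x\<close>, computed under the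
  integral sign.\<close>

lemma integral_mixed_partials_eq:
  fixes f f\<^sub>x f\<^sub>y f\<^sub>y\<^sub>x f\<^sub>x\<^sub>y :: "real \<Rightarrow> real \<Rightarrow> 'b::banach"
  assumes f_x: "\<And>x y. x \<in> {0..1} \<Longrightarrow> y \<in> {0..1} \<Longrightarrow>
      ((\<lambda>x. f x y) has_vector_derivative f\<^sub>x x y) (at x within {0..1})"
    and f_y: "\<And>x y. x \<in> {0..1} \<Longrightarrow> y \<in> {0..1} \<Longrightarrow>
      ((\<lambda>y. f x y) has_vector_derivative f\<^sub>y x y) (at y within {0..1})"
    and f_yx: "\<And>x y. x \<in> {0..1} \<Longrightarrow> y \<in> {0..1} \<Longrightarrow>
      ((\<lambda>x. f\<^sub>y x y) has_vector_derivative f\<^sub>y\<^sub>x x y) (at x within {0..1})"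
    and f_xy: "\<And>x y. x \<in> {0..1} \<Longrightarrow> y \<in> {0..1} \<Longrightarrow>
      ((\<lambda>y. f\<^sub>x x y) has_vector_derivative f\<^sub>x\<^sub>y x y) (at y within {0..1})"
    and cont: "continuous_on ({0..1} \<times> {0..1}) (\<lambda>(x, y). f\<^sub>y x y)"
      "continuous_on ({0..1} \<times> {0..1}) (\<lambda>(x, y). f\<^sub>y\<^sub>x x y)"
    and y1: "y1 \<in> {0..1}"
  shows "integral {0..y1} (f\<^sub>y\<^sub>x 0) = integral {0..y1} (f\<^sub>x\<^sub>y 0)"
proof -
  have sub: "{0..y1} \<subseteq> {0..1}" using y1 by auto
  have ftc: "integral {0..y1} (G' x) = G x y1 - G x 0"
    if "x \<in> {0..1}" "\<And>y. y \<in> {0..1} \<Longrightarrow> ((\<lambda>y. G x y) has_vector_derivative G' x y) (at y within {0..1})"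
    for G G' :: "real \<Rightarrow> real \<Rightarrow> 'b" and x
    using that sub y1
    by (intro integral_unique fundamental_theorem_of_calculus)
      (auto intro!: has_vector_derivative_within_subset[OF _ sub])
  have "((\<lambda>x. integral (cbox 0 y1) (f\<^sub>y x)) has_vector_derivative integral (cbox 0 y1) (f\<^sub>y\<^sub>x 0))
      (at 0 within {0..1})"
  proof (rule leibniz_rule_vector_derivative)
    show "f\<^sub>y x integrable_on cbox 0 y1" if "x \<in> {0..1}" for x
      using continuous_on_subset[OF continuous_on_slice[OF cont(1) that] sub]
      by (simp add: integrable_continuous_interval)
    show "continuous_on ({0..1} \<times> cbox 0 y1) (\<lambda>(x, t). f\<^sub>y\<^sub>x x t)"
      by (rule continuous_on_subset[OF cont(2)]) (use sub in auto)
  qed (use f_yx sub in auto)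
  moreover have "((\<lambda>x. integral (cbox 0 y1) (f\<^sub>y x)) has_vector_derivative f\<^sub>x 0 y1 - f\<^sub>x 0 0)
      (at 0 within {0..1})"
  proof (rule has_vector_derivative_transform[where f="\<lambda>x. f x y1 - f x 0"])
    show "((\<lambda>x. f x y1 - f x 0) has_vector_derivative f\<^sub>x 0 y1 - f\<^sub>x 0 0) (at 0 within {0..1})"
      using f_x y1 by (auto intro!: has_vector_derivative_diff)
  qed (use ftc f_y in auto)
  ultimately have "integral {0..y1} (f\<^sub>y\<^sub>x 0) = f\<^sub>x 0 y1 - f\<^sub>x 0 0"
    using vector_derivative_unique_within[OF trivial_limit_at_0_within_unit] by fastforce
  also have "\<dots> = integral {0..y1} (f\<^sub>x\<^sub>y 0)"
    using ftc[of 0 f\<^sub>x f\<^sub>x\<^sub>y] f_xy by simp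
  finally show ?thesis .
qed

lemma mixed_partials_eq_at_corner:
  fixes f f\<^sub>x f\<^sub>y f\<^sub>y\<^sub>x f\<^sub>x\<^sub>y :: "real \<Rightarrow> real \<Rightarrow> 'b::banach"
  assumes "\<And>x y. x \<in> {0..1} \<Longrightarrow> y \<in> {0..1} \<Longrightarrow>
      ((\<lambda>x. f x y) has_vector_derivative f\<^sub>x x y) (at x within {0..1})"
    and "\<And>x y. x \<in> {0..1} \<Longrightarrow> y \<in> {0..1} \<Longrightarrow>
      ((\<lambda>y. f x y) has_vector_derivative f\<^sub>y x y) (at y within {0..1})"
    and "\<And>x y. x \<in> {0..1} \<Longrightarrow> y \<in> {0..1} \<Longrightarrow>
      ((\<lambda>x. f\<^sub>y x y) has_vector_derivative f\<^sub>y\<^sub>x x y) (at x within {0..1})"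
    and "\<And>x y. x \<in> {0..1} \<Longrightarrow> y \<in> {0..1} \<Longrightarrow>
      ((\<lambda>y. f\<^sub>x x y) has_vector_derivative f\<^sub>x\<^sub>y x y) (at y within {0..1})"
    and "continuous_on ({0..1} \<times> {0..1}) (\<lambda>(x, y). f\<^sub>y x y)"
      "continuous_on ({0..1} \<times> {0..1}) (\<lambda>(x, y). f\<^sub>y\<^sub>x x y)"
      "continuous_on ({0..1} \<times> {0..1}) (\<lambda>(x, y). f\<^sub>x\<^sub>y x y)"
  shows "f\<^sub>y\<^sub>x 0 0 = f\<^sub>x\<^sub>y 0 0"
proof -
  have "((\<lambda>u. integral {0..u} (f\<^sub>y\<^sub>x 0)) has_vector_derivative f\<^sub>y\<^sub>x 0 0) (at 0 within {0..1})"
    using integral_has_vector_derivative[OF continuous_on_slice[OF assms(6)]] by simp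
  moreover have "((\<lambda>u. integral {0..u} (f\<^sub>y\<^sub>x 0)) has_vector_derivative f\<^sub>x\<^sub>y 0 0) (at 0 within {0..1})"
  proof (rule has_vector_derivative_transform)
    show "((\<lambda>u. integral {0..u} (f\<^sub>x\<^sub>y 0)) has_vector_derivative f\<^sub>x\<^sub>y 0 0) (at 0 within {0..1})"
      using integral_has_vector_derivative[OF continuous_on_slice[OF assms(7)]] by simp
  qed (use integral_mixed_partials_eq[OF assms(1-6)] in auto)
  ultimately show ?thesis
    by (rule vector_derivative_unique_within[OF trivial_limit_at_0_within_unit])
qed

lemma pd_commute:
  fixes F :: "pt \<Rightarrow> 'b::banach"
  assumes F: "smooth_H F" and "\<alpha> < 3" "\<beta> < 3" and p: "p \<in> Hs"
  shows "pd \<alpha> (pd \<beta> F) p = pd \<beta> (pd \<alpha> F) p"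
proof -
  define P where "P x y = p + x *\<^sub>R dir \<alpha> + y *\<^sub>R dir \<beta>" for x y
  have P_Hs: "x \<in> {0..1} \<Longrightarrow> y \<in> {0..1} \<Longrightarrow> P x y \<in> Hs" for x y
    unfolding P_def using Hs_add_dir[OF Hs_add_dir[OF p]] by simp
  have smooth: "smooth_H (pd \<alpha> F)" "smooth_H (pd \<beta> F)"
    "smooth_H (pd \<alpha> (pd \<beta> F))" "smooth_H (pd \<beta> (pd \<alpha> F))"
    using smooth_H_pd assms(1-3) by auto
  have d_x: "((\<lambda>x. G (P x y)) has_vector_derivative pd \<alpha> G (P x y)) (at x within {0..1})"
    and d_y: "((\<lambda>y. G (P x y)) has_vector_derivative pd \<beta> G (P x y)) (at y within {0..1})"
    if "smooth_H G" "x \<in> {0..1}" "y \<in> {0..1}" for G :: "pt \<Rightarrow> 'b" and x y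
  proof -
    have "((\<lambda>s. G ((p + y *\<^sub>R dir \<beta>) + s *\<^sub>R dir \<alpha>)) has_vector_derivative
        pd \<alpha> G ((p + y *\<^sub>R dir \<beta>) + x *\<^sub>R dir \<alpha>)) (at x within {0..1})"
      by (rule has_vector_derivative_pd_ray)
        (use that P_Hs smooth_H_differentiable[OF that(1) P_Hs] in \<open>auto simp: P_def ac_simps\<close>)
    moreover have "((\<lambda>s. G ((p + x *\<^sub>R dir \<alpha>) + s *\<^sub>R dir \<beta>)) has_vector_derivative
        pd \<beta> G ((p + x *\<^sub>R dir \<alpha>) + y *\<^sub>R dir \<beta>)) (at y within {0..1})"
      by (rule has_vector_derivative_pd_ray)
        (use that P_Hs smooth_H_differentiable[OF that(1) P_Hs] in \<open>auto simp: P_def\<close>)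
    ultimately show "((\<lambda>x. G (P x y)) has_vector_derivative pd \<alpha> G (P x y)) (at x within {0..1})"
      "((\<lambda>y. G (P x y)) has_vector_derivative pd \<beta> G (P x y)) (at y within {0..1})"
      by (simp_all add: P_def ac_simps)
  qed
  have cont: "continuous_on ({0..1} \<times> {0..1}) (\<lambda>(x, y). G (P x y))" if "smooth_H G" for G :: "pt \<Rightarrow> 'b"
    unfolding case_prod_beta
    by (rule continuous_on_compose2[OF smooth_H_continuous_on[OF that]])
      (auto simp: P_def Hs_add_dir p intro!: continuous_intros)
  have "pd \<alpha> (pd \<beta> F) (P 0 0) = pd \<beta> (pd \<alpha> F) (P 0 0)"
    by (rule mixed_partials_eq_at_corner[where f="\<lambda>x y. F (P x y)"
          and f\<^sub>x="\<lambda>x y. pd \<alpha> F (P x y)" and f\<^sub>y="\<lambda>x y. pd \<beta> F (P x y)"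
          and f\<^sub>y\<^sub>x="\<lambda>x y. pd \<alpha> (pd \<beta> F) (P x y)" and f\<^sub>x\<^sub>y="\<lambda>x y. pd \<beta> (pd \<alpha> F) (P x y)"])
      (use d_x d_y F smooth cont in auto)
  then show ?thesis by (simp add: P_def)
qed


section \<open>The Dirac and wave operators\<close>

lemma sum_lessThan_3: "(\<Sum>\<mu><3. f \<mu>) = f 0 + f 1 + f (2::nat)"
  by (simp add: eval_nat_numeral)

lemma gam0_mult_vec: "gam 0 *v x = vector [x$1, -(x$2)]"
  and gam1_mult_vec: "gam (Suc 0) *v x = vector [x$2, -(x$1)]"
  and gam2_mult_vec: "gam 2 *v x = vector [-\<i> * x$2, -\<i> * x$1]"
  by (simp_all add: vec_eq_iff forall_2 matrix_vector_mult_def sum_2 gam_def)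

lemmas gam_mult_vec = gam0_mult_vec gam1_mult_vec gam2_mult_vec

lemma scaleR_vec_component: "(r *\<^sub>R x) $ i = complex_of_real r * (x $ i :: complex)"
  by (subst vector_scaleR_component) (rule scaleR_conv_of_real)

lemma bounded_linear_vector_smult: "bounded_linear (\<lambda>x::complex^2. c *s x)"
proof -
  have "linear (\<lambda>x::complex^2. c *s x)"
    by (rule linearI) (auto simp: vec_eq_iff scaleR_vec_component algebra_simps simp del: vector_scaleR_component)
  then show ?thesis by (simp add: linear_conv_bounded_linear)
qed

lemma hdot_expand: "hdot u w = cnj (u$1) * w$1 + cnj (u$2) * w$2"
  by (simp add: hdot_def sum_2)

lemma bounded_bilinear_hdot: "bounded_bilinear hdot"
proof -
  have "bilinear hdot"
    unfolding bilinear_def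
    by (auto intro!: linearI simp: hdot_def sum_2 scaleR_vec_component scaleR_conv_of_real[where 'a=complex] algebra_simps
        simp del: vector_scaleR_component)
  then show ?thesis by (simp add: bilinear_conv_bounded_bilinear)
qed

lemma dirac_expand: "dirac f p = gam 0 *v pd 0 f p + gam 1 *v pd 1 f p + gam 2 *v pd 2 f p"
  by (simp add: dirac_def sum_lessThan_3)

lemma Box_expand: "Box f p = - pd 0 (pd 0 f) p + pd 1 (pd 1 f) p + pd 2 (pd 2 f) p"
  by (simp add: Box_def sum_lessThan_3 eta_def)

lemma smooth_H_dirac: "smooth_H f \<Longrightarrow> smooth_H (dirac f)"
  unfolding dirac_def
  by (rule smooth_H_sum) (auto intro!: smooth_H_bounded_linear[OF matrix_vector_mul_bounded_linear] smooth_H_pd)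

lemma pd_dirac:
  assumes "smooth_H f" and "q \<in> Hs"
  shows "pd \<mu> (dirac f) q = (\<Sum>\<nu><3. gam \<nu> *v pd \<mu> (pd \<nu> f) q)"
  unfolding dirac_def
  by (rule pd_sum[OF assms(2)]) (auto intro!: smooth_H_differentiable[OF _ assms(2)] smooth_H_pd[OF assms(1)])

lemma dirac_linear:
  assumes f: "smooth_H f" and g: "smooth_H g" and q: "q \<in> Hs"
  shows "dirac (\<lambda>p. a *s f p + b *s g p) q = a *s dirac f q + b *s dirac g q"
proof -
  note L = bounded_linear_vector_smult and d = smooth_H_differentiable[OF _ q]
  have "pd \<mu> (\<lambda>p. a *s f p + b *s g p) q = pd \<mu> (\<lambda>p. a *s f p) q + pd \<mu> (\<lambda>p. b *s g p) q" for \<mu>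
    by (rule pd_add[OF q differentiable_bounded_linear[OF L d[OF f]] differentiable_bounded_linear[OF L d[OF g]]])
  also have "\<dots> \<mu> = a *s pd \<mu> f q + b *s pd \<mu> g q" for \<mu>
    using pd_bounded_linear[OF L q d[OF f]] pd_bounded_linear[OF L q d[OF g]] by simp
  finally show ?thesis
    unfolding dirac_expand by (simp add: vec_eq_iff forall_2 gam_mult_vec algebra_simps)
qed

text \<open>The Clifford relations \<open>\<gamma>\<^sup>\<mu>\<gamma>\<^sup>\<nu> + \<gamma>\<^sup>\<nu>\<gamma>\<^sup>\<mu> = -2\<eta>\<^sup>\<mu>\<^sup>\<nu>\<close> together with the symmetry of
  second derivatives.\<close>

lemma dirac_dirac:
  assumes "smooth_H f" and "q \<in> Hs"
  shows "dirac (dirac f) q = - Box f q"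
  unfolding dirac_expand[of "dirac f"] pd_dirac[OF assms] Box_expand sum_lessThan_3
  using pd_commute[OF assms(1) _ _ assms(2), of 0 1] pd_commute[OF assms(1) _ _ assms(2), of 0 2]
    pd_commute[OF assms(1) _ _ assms(2), of 1 2]
  by (simp add: gam_mult_vec vec_eq_iff forall_2 algebra_simps)

lemma pd_pd_bounded_bilinear:
  fixes B :: "'a::real_normed_vector \<Rightarrow> 'b::real_normed_vector \<Rightarrow> 'c::real_normed_vector"
  assumes B: "bounded_bilinear B" and f: "smooth_H f" and g: "smooth_H g" and q: "q \<in> Hs" and "\<alpha> < 3"
  shows "pd \<alpha> (pd \<alpha> (\<lambda>p. B (f p) (g p))) q =
    B (pd \<alpha> (pd \<alpha> f) q) (g q) + 2 *\<^sub>R B (pd \<alpha> f q) (pd \<alpha> g q) + B (f q) (pd \<alpha> (pd \<alpha> g) q)"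
proof -
  have f': "smooth_H (pd \<alpha> f)" and g': "smooth_H (pd \<alpha> g)"
    using smooth_H_pd f g \<open>\<alpha> < 3\<close> by auto
  note d = smooth_H_differentiable[OF _ q]
  have eq: "eq_on_Hs (pd \<alpha> (\<lambda>p. B (f p) (g p))) (\<lambda>p. B (pd \<alpha> f p) (g p) + B (f p) (pd \<alpha> g p))"
    unfolding eq_on_Hs_def
    using pd_bounded_bilinear[OF B _ smooth_H_differentiable[OF f] smooth_H_differentiable[OF g]] by simp
  have "pd \<alpha> (pd \<alpha> (\<lambda>p. B (f p) (g p))) q
      = pd \<alpha> (\<lambda>p. B (pd \<alpha> f p) (g p)) q + pd \<alpha> (\<lambda>p. B (f p) (pd \<alpha> g p)) q"
    using pd_cong_Hs[OF q eq] pd_add[OF q differentiable_bounded_bilinear[OF B d[OF f'] d[OF g]]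
        differentiable_bounded_bilinear[OF B d[OF f] d[OF g']]] by simp
  also have "\<dots> = B (pd \<alpha> (pd \<alpha> f) q) (g q) + B (pd \<alpha> f q) (pd \<alpha> g q)
       + (B (pd \<alpha> f q) (pd \<alpha> g q) + B (f q) (pd \<alpha> (pd \<alpha> g) q))"
    using pd_bounded_bilinear[OF B q d[OF f'] d[OF g]] pd_bounded_bilinear[OF B q d[OF f] d[OF g']]
    by simp
  finally show ?thesis by (simp add: scaleR_2 algebra_simps)
qed

lemma Box_bounded_bilinear:
  fixes B :: "'a::real_normed_vector \<Rightarrow> 'b::real_normed_vector \<Rightarrow> 'c::real_normed_vector"
  assumes B: "bounded_bilinear B" and "smooth_H f" and "smooth_H g" and "q \<in> Hs"
  shows "Box (\<lambda>p. B (f p) (g p)) q = B (Box f q) (g q)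
     + 2 *\<^sub>R (- B (pd 0 f q) (pd 0 g q) + B (pd 1 f q) (pd 1 g q) + B (pd 2 f q) (pd 2 g q))
     + B (f q) (Box g q)"
  unfolding Box_expand
  using pd_pd_bounded_bilinear[OF assms, of 0] pd_pd_bounded_bilinear[OF assms, of 1]
    pd_pd_bounded_bilinear[OF assms, of 2]
  by (simp add: bounded_bilinear.add_left[OF B] bounded_bilinear.add_right[OF B]
      bounded_bilinear.minus_left[OF B] bounded_bilinear.minus_right[OF B]
      bounded_bilinear.diff_left[OF B] bounded_bilinear.diff_right[OF B] algebra_simps)

lemma Box_bounded_linear:
  fixes L :: "'a::real_normed_vector \<Rightarrow> 'b::real_normed_vector"
  assumes L: "bounded_linear L" and f: "smooth_H f" and q: "q \<in> Hs"
  shows "Box (\<lambda>p. L (f p)) q = L (Box f q)"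
proof -
  have "pd \<alpha> (pd \<alpha> (\<lambda>p. L (f p))) q = L (pd \<alpha> (pd \<alpha> f) q)" if "\<alpha> < 3" for \<alpha>
  proof -
    have eq: "eq_on_Hs (pd \<alpha> (\<lambda>p. L (f p))) (\<lambda>p. L (pd \<alpha> f p))"
      unfolding eq_on_Hs_def using pd_bounded_linear[OF L _ smooth_H_differentiable[OF f]] by simp
    show ?thesis
      using pd_cong_Hs[OF q eq] pd_bounded_linear[OF L q smooth_H_differentiable[OF smooth_H_pd[OF f that] q]]
      by simp
  qed
  then show ?thesis unfolding Box_expand by (simp add: linear_simps[OF L])
qed

lemma Box_diff:
  assumes f: "smooth_H f" and g: "smooth_H g" and q: "q \<in> Hs"
  shows "Box (\<lambda>p. f p - g p) q = Box f q - Box g q"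
proof -
  have "pd \<alpha> (pd \<alpha> (\<lambda>p. f p - g p)) q = pd \<alpha> (pd \<alpha> f) q - pd \<alpha> (pd \<alpha> g) q" if "\<alpha> < 3" for \<alpha>
  proof -
    have eq: "eq_on_Hs (pd \<alpha> (\<lambda>p. f p - g p)) (\<lambda>p. pd \<alpha> f p - pd \<alpha> g p)"
      unfolding eq_on_Hs_def using pd_diff[OF _ smooth_H_differentiable[OF f] smooth_H_differentiable[OF g]]
      by simp
    show ?thesis
      using pd_cong_Hs[OF q eq] pd_diff[OF q smooth_H_differentiable[OF smooth_H_pd[OF f that] q]
          smooth_H_differentiable[OF smooth_H_pd[OF g that] q]]
      by simp
  qed
  then show ?thesis unfolding Box_expand by (simp add: algebra_simps)
qed


section \<open>The normal form identities\<close>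

lemma smooth_H_smul: "smooth_H v \<Longrightarrow> smooth_H \<psi> \<Longrightarrow> smooth_H (smul v \<psi>)"
  unfolding smul_def by (rule smooth_H_bounded_bilinear[OF bounded_bilinear_scaleR])

text \<open>Applying the Dirac operator once more to \<open>-i\<gamma>\<^sup>\<mu>\<partial>\<^sub>\<mu>\<psi> = v\<psi>\<close>.\<close>

lemma Box_dirac_solution:
  assumes v: "smooth_H v" and \<psi>: "smooth_H \<psi>" and q: "q \<in> Hs"
    and dirac_eq: "\<And>p. p \<in> Hs \<Longrightarrow> - (\<i> *s dirac \<psi> p) = v p *\<^sub>R \<psi> p"
  shows "Box \<psi> q = - (\<i> *s dirac (smul v \<psi>) q)"
proof -
  have "X = \<i> *s Y" if "- (\<i> *s X) = Y" for X Y :: spinor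
  proof -
    from that have "Y = - (\<i> *s X)" by simp
    then show ?thesis by (simp add: vec_eq_iff)
  qed
  then have eq: "eq_on_Hs (dirac \<psi>) (\<lambda>p. \<i> *s smul v \<psi> p)"
    unfolding eq_on_Hs_def smul_def using dirac_eq by blast
  have "pd \<mu> (dirac \<psi>) q = \<i> *s pd \<mu> (smul v \<psi>) q" for \<mu>
    using pd_cong_Hs[OF q eq] pd_bounded_linear[OF bounded_linear_vector_smult q
        smooth_H_differentiable[OF smooth_H_smul[OF v \<psi>] q]] by simp
  then have "dirac (dirac \<psi>) q = \<i> *s dirac (smul v \<psi>) q"
    unfolding dirac_expand by (simp add: vec_eq_iff forall_2 gam_mult_vec algebra_simps)
  then show ?thesis using dirac_dirac[OF \<psi> q] by (metis minus_minus)
qed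

lemma mass_minus_Box_smul:
  assumes v: "smooth_H v" and \<psi>: "smooth_H \<psi>" and q: "q \<in> Hs"
    and dirac_eq: "\<And>p. p \<in> Hs \<Longrightarrow> - (\<i> *s dirac \<psi> p) = v p *\<^sub>R \<psi> p"
    and kg_eq: "complex_of_real (- Box v q + v q) = hdot (\<psi> q) (gam 0 *v \<psi> q)"
  shows "v q *\<^sub>R \<psi> q - Box (smul v \<psi>) q = N1 \<psi> v q + N2 \<psi> q + 2 *\<^sub>R Q0 \<psi> v q"
proof -
  have N2: "N2 \<psi> q = (- Box v q + v q) *\<^sub>R \<psi> q"
    unfolding N2_def kg_eq[symmetric]
    by (simp add: vec_eq_iff scaleR_vec_component algebra_simps del: vector_scaleR_component)
  have Box_smul: "Box (smul v \<psi>) q = Box v q *\<^sub>R \<psi> q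
     + 2 *\<^sub>R (- (pd 0 v q *\<^sub>R pd 0 \<psi> q) + pd 1 v q *\<^sub>R pd 1 \<psi> q + pd 2 v q *\<^sub>R pd 2 \<psi> q)
     + v q *\<^sub>R Box \<psi> q"
    unfolding smul_def by (rule Box_bounded_bilinear[OF bounded_bilinear_scaleR v \<psi> q])
  show ?thesis
    unfolding Box_smul N2 N1_def Q0_def
    by (simp add: Box_dirac_solution[OF v \<psi> q dirac_eq] vec_eq_iff scaleR_vec_component algebra_simps
        del: vector_scaleR_component)
qed

lemma dirac_psi_tilde:
  assumes v: "smooth_H v" and \<psi>: "smooth_H \<psi>" and q: "q \<in> Hs"
    and dirac_eq: "\<And>p. p \<in> Hs \<Longrightarrow> - (\<i> *s dirac \<psi> p) = v p *\<^sub>R \<psi> p"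
    and kg_eq: "complex_of_real (- Box v q + v q) = hdot (\<psi> q) (gam 0 *v \<psi> q)"
  shows "- (\<i> *s dirac (\<lambda>p. \<psi> p + \<i> *s dirac (smul v \<psi>) p) q) = N1 \<psi> v q + N2 \<psi> q + 2 *\<^sub>R Q0 \<psi> v q"
proof -
  have "dirac (\<lambda>p. \<psi> p + \<i> *s dirac (smul v \<psi>) p) q = dirac \<psi> q + \<i> *s dirac (dirac (smul v \<psi>)) q"
    using dirac_linear[OF \<psi> smooth_H_dirac[OF smooth_H_smul[OF v \<psi>]] q, of 1 \<i>] by simp
  then have "- (\<i> *s dirac (\<lambda>p. \<psi> p + \<i> *s dirac (smul v \<psi>) p) q)
      = - (\<i> *s dirac \<psi> q) + dirac (dirac (smul v \<psi>)) q"
    by (simp add: vec_eq_iff algebra_simps)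
  also have "\<dots> = v q *\<^sub>R \<psi> q - Box (smul v \<psi>) q"
    using dirac_eq[OF q] dirac_dirac[OF smooth_H_smul[OF v \<psi>] q] by simp
  finally show ?thesis using mass_minus_Box_smul[OF v \<psi> q dirac_eq kg_eq] by simp
qed

lemma wave_Psi_tilde:
  assumes v: "smooth_H v" and \<psi>: "smooth_H \<psi>" and \<Psi>: "smooth_H \<Psi>" and q: "q \<in> Hs"
    and dirac_eq: "\<And>p. p \<in> Hs \<Longrightarrow> - (\<i> *s dirac \<psi> p) = v p *\<^sub>R \<psi> p"
    and kg_eq: "complex_of_real (- Box v q + v q) = hdot (\<psi> q) (gam 0 *v \<psi> q)"
    and wave_eq: "- Box \<Psi> q = \<i> *s dirac \<psi> q"
  shows "- Box (\<lambda>p. \<Psi> p - v p *\<^sub>R \<psi> p) q = - N1 \<psi> v q - N2 \<psi> q - 2 *\<^sub>R Q0 \<psi> v q"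
proof -
  have "- Box (\<lambda>p. \<Psi> p - v p *\<^sub>R \<psi> p) q = - Box \<Psi> q + Box (smul v \<psi>) q"
    using Box_diff[OF \<Psi> smooth_H_smul[OF v \<psi>] q] by (simp add: smul_def)
  also have "\<dots> = - (v q *\<^sub>R \<psi> q - Box (smul v \<psi>) q)"
    using wave_eq minus_equation_iff[THEN iffD1, OF dirac_eq[OF q]] by simp
  finally show ?thesis using mass_minus_Box_smul[OF v \<psi> q dirac_eq kg_eq] by (simp add: algebra_simps)
qed

lemma klein_gordon_v_tilde:
  assumes v: "smooth_H v" and \<psi>: "smooth_H \<psi>" and q: "q \<in> Hs"
    and dirac_eq: "\<And>p. p \<in> Hs \<Longrightarrow> - (\<i> *s dirac \<psi> p) = v p *\<^sub>R \<psi> p"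
    and kg_eq: "complex_of_real (- Box v q + v q) = hdot (\<psi> q) (gam 0 *v \<psi> q)"
  shows "(let vt = (\<lambda>q. complex_of_real (v q) - hdot (\<psi> q) (gam 0 *v \<psi> q))
        in - Box vt q + vt q = N3 \<psi> v q + N4 \<psi> q)"
proof -
  define h where "h q = hdot (\<psi> q) (gam 0 *v \<psi> q)" for q
  have g: "smooth_H (\<lambda>q. gam 0 *v \<psi> q)"
    by (rule smooth_H_bounded_linear[OF matrix_vector_mul_bounded_linear \<psi>])
  have "smooth_H h"
    unfolding h_def by (rule smooth_H_bounded_bilinear[OF bounded_bilinear_hdot \<psi> g])
  from Box_diff[OF smooth_H_bounded_linear[OF bounded_linear_of_real v] this q]
  have "Box (\<lambda>q. complex_of_real (v q) - h q) q = complex_of_real (Box v q) - Box h q"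
    by (simp add: Box_bounded_linear[OF bounded_linear_of_real v q])
  moreover have "Box h q = N3 \<psi> v q + N4 \<psi> q"
  proof -
    have "Box h q = hdot (Box \<psi> q) (gam 0 *v \<psi> q)
       + 2 *\<^sub>R (- hdot (pd 0 \<psi> q) (gam 0 *v pd 0 \<psi> q) + hdot (pd 1 \<psi> q) (gam 0 *v pd 1 \<psi> q)
                + hdot (pd 2 \<psi> q) (gam 0 *v pd 2 \<psi> q))
       + hdot (\<psi> q) (gam 0 *v Box \<psi> q)"
      unfolding h_def using Box_bounded_bilinear[OF bounded_bilinear_hdot \<psi> g q]
      by (simp add: Box_bounded_linear[OF matrix_vector_mul_bounded_linear \<psi> q]
          pd_bounded_linear[OF matrix_vector_mul_bounded_linear q smooth_H_differentiable[OF \<psi> q]])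
    then show ?thesis
      unfolding dirac_expand N3_def N4_def sum_lessThan_3
      by (simp add: Box_dirac_solution[OF v \<psi> q dirac_eq] dirac_expand eta_def hdot_expand gam_mult_vec matrix_vector_mul_assoc[symmetric]
          scaleR_conv_of_real[where 'a=complex] algebra_simps)
  qed
  moreover have "(\<lambda>q. complex_of_real (v q) - hdot (\<psi> q) (gam 0 *v \<psi> q)) = (\<lambda>q. complex_of_real (v q) - h q)"
    and "h q = complex_of_real (- Box v q + v q)"
    using kg_eq by (simp_all add: h_def)
  ultimately show ?thesis by (simp add: Let_def)
qed


section \<open>Commuting the modified vector fields with the Dirac operator\<close>

lemma bounded_linear_coord: "bounded_linear (coord a)"
proof -
  have "linear (coord a)"
    by (rule linearI) (auto simp: coord_def)
  then show ?thesis by (simp add: linear_conv_bounded_linear)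
qed

lemma pd_coord: "q \<in> Hs \<Longrightarrow> pd \<mu> (coord a) q = coord a (dir \<mu>)"
  by (rule pd_bounded_linear_fun[OF bounded_linear_coord])

lemma smooth_H_coord_scaleR: "smooth_H f \<Longrightarrow> smooth_H (\<lambda>p. coord a p *\<^sub>R f p)"
  by (rule smooth_H_bounded_bilinear[OF bounded_bilinear_scaleR
        smooth_H_bounded_linear_fun[OF bounded_linear_coord]])

lemma pd_coord_scaleR:
  assumes "smooth_H f" and q: "q \<in> Hs"
  shows "pd \<mu> (\<lambda>p. coord a p *\<^sub>R f p) q = coord a (dir \<mu>) *\<^sub>R f q + coord a q *\<^sub>R pd \<mu> f q"
  using pd_bounded_bilinear[OF bounded_bilinear_scaleR q
      smooth_H_differentiable[OF smooth_H_bounded_linear_fun[OF bounded_linear_coord] q]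
      smooth_H_differentiable[OF assms]]
  by (simp add: pd_coord[OF q])

text \<open>With \<open>(a, b, \<sigma>, c, d)\<close> equal to \<open>(1, 2, -1, 2, 1)\<close>, \<open>(0, 1, 1, 1, 0)\<close> and \<open>(0, 2, 1, 2, 0)\<close>
  this is \<open>\<Omega>\<close>, \<open>L\<^sub>1\<close> and \<open>L\<^sub>2\<close> with their spin corrections.\<close>

definition modified_field ::
    "nat \<Rightarrow> nat \<Rightarrow> real \<Rightarrow> nat \<Rightarrow> nat \<Rightarrow> cmat \<Rightarrow> (pt \<Rightarrow> spinor) \<Rightarrow> pt \<Rightarrow> spinor" where
  "modified_field a b \<sigma> c d M f p =
     coord a p *\<^sub>R pd b f p + \<sigma> *\<^sub>R (coord c p *\<^sub>R pd d f p) - (1/2::real) *\<^sub>R (M *v f p)"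

lemma Gamk_cases:
  "Gamk k f = (if k = 1 then pd 0 f else if k = 2 then pd 1 f else if k = 3 then pd 2 f
     else if k = 4 then modified_field 1 2 (-1) 2 1 (gam 1 ** gam 2) f
     else if k = 5 then modified_field 0 1 1 1 0 (gam 0 ** gam 1) f
     else modified_field 0 2 1 2 0 (gam 0 ** gam 2) f)"
  by (auto simp: fun_eq_iff Gamk_def modified_field_def)

lemma
  assumes f: "smooth_H f" and "b < 3" "d < 3"
  shows smooth_H_modified_field: "smooth_H (modified_field a b \<sigma> c d M f)"
    and pd_modified_field: "q \<in> Hs \<Longrightarrow> pd \<mu> (modified_field a b \<sigma> c d M f) q =
      coord a (dir \<mu>) *\<^sub>R pd b f q + coord a q *\<^sub>R pd \<mu> (pd b f) q
      + \<sigma> *\<^sub>R (coord c (dir \<mu>) *\<^sub>R pd d f q + coord c q *\<^sub>R pd \<mu> (pd d f) q)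
      - (1/2::real) *\<^sub>R (M *v pd \<mu> f q)"
proof -
  have s: "smooth_H (\<lambda>p. coord a p *\<^sub>R pd b f p)" "smooth_H (\<lambda>p. coord c p *\<^sub>R pd d f p)"
    "smooth_H (pd b f)" "smooth_H (pd d f)"
    using smooth_H_coord_scaleR smooth_H_pd f assms(2,3) by auto
  have s': "smooth_H (\<lambda>p. \<sigma> *\<^sub>R (coord c p *\<^sub>R pd d f p))" "smooth_H (\<lambda>p. (1/2::real) *\<^sub>R (M *v f p))"
    using smooth_H_bounded_linear[OF bounded_linear_scaleR_right s(2)]
      smooth_H_bounded_linear[OF bounded_linear_scaleR_right
        smooth_H_bounded_linear[OF matrix_vector_mul_bounded_linear f]] by auto
  have eq: "modified_field a b \<sigma> c d M f
      = (\<lambda>p. (coord a p *\<^sub>R pd b f p + \<sigma> *\<^sub>R (coord c p *\<^sub>R pd d f p)) - (1/2::real) *\<^sub>R (M *v f p))"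
    by (simp add: fun_eq_iff modified_field_def)
  show "smooth_H (modified_field a b \<sigma> c d M f)"
    unfolding eq by (intro smooth_H_diff smooth_H_add s s')
  assume q: "q \<in> Hs"
  note d = smooth_H_differentiable[OF _ q]
  show "pd \<mu> (modified_field a b \<sigma> c d M f) q = coord a (dir \<mu>) *\<^sub>R pd b f q
      + coord a q *\<^sub>R pd \<mu> (pd b f) q
      + \<sigma> *\<^sub>R (coord c (dir \<mu>) *\<^sub>R pd d f q + coord c q *\<^sub>R pd \<mu> (pd d f) q)
      - (1/2::real) *\<^sub>R (M *v pd \<mu> f q)"
    unfolding eq pd_diff[OF q d[OF smooth_H_add[OF s(1) s'(1)]] d[OF s'(2)]]
      pd_add[OF q d[OF s(1)] d[OF s'(1)]]
      pd_bounded_linear[OF bounded_linear_scaleR_right q d[OF s(2)]]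
      pd_bounded_linear[OF bounded_linear_scaleR_right q d[OF smooth_H_bounded_linear[OF matrix_vector_mul_bounded_linear f]]]
      pd_bounded_linear[OF matrix_vector_mul_bounded_linear q d[OF f]]
      pd_coord_scaleR[OF s(3) q] pd_coord_scaleR[OF s(4) q] ..
qed

lemma smooth_H_Gamk: "smooth_H f \<Longrightarrow> smooth_H (Gamk k f)"
  unfolding Gamk_cases by (auto intro!: smooth_H_pd smooth_H_modified_field)

lemma eq_on_Hs_Gamk: "eq_on_Hs f g \<Longrightarrow> eq_on_Hs (Gamk k f) (Gamk k g)"
  unfolding Gamk_def using pd_cong_Hs[of _ f g] by (auto simp: eq_on_Hs_def)

lemma Gamk_vector_smult:
  assumes "smooth_H h" and q: "q \<in> Hs"
  shows "Gamk k (\<lambda>p. c *s h p) q = c *s Gamk k h q"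
proof -
  have "pd \<mu> (\<lambda>p. c *s h p) q = c *s pd \<mu> h q" for \<mu>
    by (rule pd_bounded_linear[OF bounded_linear_vector_smult q smooth_H_differentiable[OF assms]])
  then show ?thesis
    unfolding Gamk_def
    by (simp add: vec_eq_iff forall_2 gam_mult_vec matrix_vector_mul_assoc[symmetric] scaleR_vec_component
        algebra_simps del: vector_scaleR_component)
qed

text \<open>The spin corrections \<open>-\<gamma>\<^sup>\<mu>\<gamma>\<^sup>\<nu>/2\<close> compensate the commutators of \<open>x\<^sub>a\<partial>\<^sub>b\<close> with \<open>\<gamma>\<^sup>\<mu>\<partial>\<^sub>\<mu>\<close>.\<close>

lemma Gamk_dirac:
  assumes f: "smooth_H f" and q: "q \<in> Hs"
  shows "Gamk k (dirac f) q = dirac (Gamk k f) q"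
proof -
  note S = pd_commute[OF f _ _ q, of 0 1] pd_commute[OF f _ _ q, of 0 2] pd_commute[OF f _ _ q, of 1 2]
  note simps = dirac_def pd_modified_field[OF f _ _ q] modified_field_def dirac_expand[of f q]
    pd_dirac[OF f q] sum_lessThan_3 gam_mult_vec matrix_vector_mul_assoc[symmetric] coord_def dir_def
    vec_eq_iff forall_2 scaleR_vec_component algebra_simps
  consider "k \<in> {1, 2, 3}" | "k = 4" | "k = 5" | "k \<notin> {1, 2, 3, 4, 5}" by blast
  then show ?thesis
  proof cases
    case 1
    have "pd \<mu> (dirac f) q = dirac (pd \<mu> f) q" if "\<mu> < 3" for \<mu>
      unfolding pd_dirac[OF f q] dirac_def using pd_commute[OF f that _ q] by (intro sum.cong) auto
    with 1 show ?thesis by (auto simp: Gamk_cases)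
  qed (use S in \<open>auto simp: Gamk_cases simps simp del: vector_scaleR_component\<close>)
qed


definition dirac_op :: "(pt \<Rightarrow> spinor) \<Rightarrow> pt \<Rightarrow> spinor" where
  "dirac_op f q = (- \<i>) *s dirac f q"

text \<open>Locality and preservation of smoothness are carried along because they make the
  commutation with \<open>dirac_op\<close> stable under composition.\<close>

definition dirac_compatible :: "((pt \<Rightarrow> spinor) \<Rightarrow> pt \<Rightarrow> spinor) \<Rightarrow> bool" where
  "dirac_compatible F \<longleftrightarrow>
     (\<forall>f g. eq_on_Hs f g \<longrightarrow> eq_on_Hs (F f) (F g)) \<and> (\<forall>f. smooth_H f \<longrightarrow> smooth_H (F f))
     \<and> (\<forall>f. smooth_H f \<longrightarrow> eq_on_Hs (F (dirac_op f)) (dirac_op (F f)))"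

lemma dirac_compatible_Gamk: "dirac_compatible (Gamk k)"
  unfolding dirac_compatible_def
proof (intro conjI allI impI)
  fix f :: "pt \<Rightarrow> spinor" assume f: "smooth_H f"
  show "eq_on_Hs (Gamk k (dirac_op f)) (dirac_op (Gamk k f))"
    unfolding eq_on_Hs_def dirac_op_def[abs_def]
    using Gamk_vector_smult[OF smooth_H_dirac[OF f], of _ k "- \<i>"] Gamk_dirac[OF f] by simp
qed (simp_all add: eq_on_Hs_Gamk smooth_H_Gamk)

lemma dirac_compatible_id: "dirac_compatible id"
  by (simp add: dirac_compatible_def)

lemma dirac_compatible_comp:
  assumes F: "dirac_compatible F" and G: "dirac_compatible G"
  shows "dirac_compatible (F \<circ> G)"
  unfolding dirac_compatible_def o_def
proof (intro conjI allI impI)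
  fix f :: "pt \<Rightarrow> spinor" assume f: "smooth_H f"
  then have "eq_on_Hs (F (G (dirac_op f))) (F (dirac_op (G f)))"
    and "eq_on_Hs (F (dirac_op (G f))) (dirac_op (F (G f)))"
    using F G by (simp_all add: dirac_compatible_def)
  then show "eq_on_Hs (F (G (dirac_op f))) (dirac_op (F (G f)))"
    by (rule eq_on_Hs_trans)
qed (use F G in \<open>simp_all add: dirac_compatible_def\<close>)

lemma dirac_compatible_funpow: "dirac_compatible F \<Longrightarrow> dirac_compatible (F ^^ n)"
  by (induction n) (auto intro: dirac_compatible_comp simp: dirac_compatible_id)

lemma dirac_compatible_GamI: "dirac_compatible (GamI I)"
proof -
  let ?F = "\<lambda>k g. (Gamk k ^^ I k) \<circ> g"
  have "dirac_compatible (foldr ?F ks id)" for ks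
  proof (induction ks)
    case (Cons k ks)
    have "foldr ?F (k # ks) id = (Gamk k ^^ I k) \<circ> foldr ?F ks id" by simp
    then show ?case
      using dirac_compatible_comp[OF dirac_compatible_funpow[OF dirac_compatible_Gamk] Cons.IH]
      by (simp only:)
  qed (simp add: dirac_compatible_def)
  then show ?thesis unfolding GamI_def .
qed


section \<open>Uniqueness for the free Dirac equation\<close>

text \<open>The Dirac current \<open>j\<^sup>\<mu> = \<psi>\<^sup>*\<gamma>\<^sup>0\<gamma>\<^sup>\<mu>\<psi>\<close>, which is real since \<open>\<gamma>\<^sup>0\<gamma>\<^sup>\<mu>\<close> is Hermitian.\<close>

definition current :: "nat \<Rightarrow> spinor \<Rightarrow> real" where
  "current \<mu> \<phi> = inner \<phi> ((gam 0 ** gam \<mu>) *v \<phi>)"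

lemma inner_spinor: "inner (x::spinor) y = Re (cnj (x$1) * y$1) + Re (cnj (x$2) * y$2)"
  by (simp add: inner_vec_def sum_2 inner_complex_def)

lemma current_0: "current 0 \<phi> = (cmod (\<phi>$1))\<^sup>2 + (cmod (\<phi>$2))\<^sup>2"
  by (simp add: current_def inner_spinor matrix_vector_mul_assoc[symmetric] gam_mult_vec cmod_power2)
    (simp add: power2_eq_square)

lemma current_0_nonneg: "current 0 \<phi> \<ge> 0"
  by (simp add: current_0)

lemma current_1_2: "current 1 \<phi> = 2 * Re (cnj (\<phi>$1) * \<phi>$2)" "current 2 \<phi> = 2 * Im (cnj (\<phi>$1) * \<phi>$2)"
  by (simp_all add: current_def inner_spinor matrix_vector_mul_assoc[symmetric] gam_mult_vec)

lemma current_causal: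
  assumes "\<xi>\<^sub>1\<^sup>2 + \<xi>\<^sub>2\<^sup>2 \<le> L\<^sup>2" and "0 \<le> L"
  shows "0 \<le> L * current 0 \<phi> + \<xi>\<^sub>1 * current 1 \<phi> + \<xi>\<^sub>2 * current 2 \<phi>"
proof -
  define w where "w = Complex \<xi>\<^sub>1 (- \<xi>\<^sub>2)"
  have "cmod w \<le> L"
    using real_sqrt_le_mono[OF assms(1)] assms(2) by (simp add: w_def cmod_def)
  have "- (\<xi>\<^sub>1 * current 1 \<phi> + \<xi>\<^sub>2 * current 2 \<phi>) = - 2 * Re (cnj (\<phi>$1) * \<phi>$2 * w)"
    unfolding current_1_2 by (simp add: w_def algebra_simps)
  also have "\<dots> \<le> 2 * (cmod (\<phi>$1) * cmod (\<phi>$2) * cmod w)"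
    using abs_Re_le_cmod[of "cnj (\<phi>$1) * \<phi>$2 * w"] by (simp add: norm_mult)
  also have "\<dots> \<le> ((cmod (\<phi>$1))\<^sup>2 + (cmod (\<phi>$2))\<^sup>2) * L"
    using sum_squares_bound[of "cmod (\<phi>$1)" "cmod (\<phi>$2)"] \<open>cmod w \<le> L\<close>
    by (metis (no_types, lifting) mult.assoc mult_mono norm_ge_zero zero_le_power2 add_nonneg_nonneg
        mult_nonneg_nonneg zero_le_numeral)
  finally show ?thesis by (simp add: current_0 algebra_simps)
qed

lemma bounded_bilinear_inner_mult_vec: "bounded_bilinear (\<lambda>x y::spinor. inner x (M *v y))"
  by (rule bounded_bilinear.comp[OF bounded_bilinear_inner bounded_linear_ident matrix_vector_mul_bounded_linear])

lemma smooth_H_current: "smooth_H \<Phi> \<Longrightarrow> smooth_H (\<lambda>q. current \<mu> (\<Phi> q))"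
  unfolding current_def by (rule smooth_H_bounded_bilinear[OF bounded_bilinear_inner_mult_vec])

lemma pd_current:
  assumes "smooth_H \<Phi>" and "q \<in> Hs"
  shows "pd \<mu> (\<lambda>q. current \<nu> (\<Phi> q)) q
    = inner (pd \<mu> \<Phi> q) ((gam 0 ** gam \<nu>) *v \<Phi> q) + inner (\<Phi> q) ((gam 0 ** gam \<nu>) *v pd \<mu> \<Phi> q)"
  unfolding current_def
  using pd_bounded_bilinear[OF bounded_bilinear_inner_mult_vec assms(2)
      smooth_H_differentiable[OF assms] smooth_H_differentiable[OF assms]] .

lemma current_conservation:
  assumes "smooth_H \<Phi>" and "q \<in> Hs" and "dirac \<Phi> q = 0"
  shows "(\<Sum>\<mu><3. pd \<mu> (\<lambda>q. current \<mu> (\<Phi> q)) q) = 0"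
proof -
  have "(gam 0 *v pd 0 \<Phi> q + gam 1 *v pd 1 \<Phi> q + gam 2 *v pd 2 \<Phi> q) $ i = 0" for i
    using assms(3) by (simp add: dirac_expand)
  from this[of 1] this[of 2]
  have t1: "pd 0 \<Phi> q $ 1 = \<i> * pd 2 \<Phi> q $ 2 - pd 1 \<Phi> q $ 2"
    and t2: "pd 0 \<Phi> q $ 2 = - pd 1 \<Phi> q $ 1 - \<i> * pd 2 \<Phi> q $ 1"
    by (simp_all add: gam_mult_vec) algebra+
  show ?thesis
    by (simp add: t1 t2 pd_current[OF assms(1,2)] sum_lessThan_3 inner_spinor matrix_vector_mul_assoc[symmetric]
        gam_mult_vec algebra_simps)
qed


lemma has_real_derivative_max0_power2: "((\<lambda>s::real. (max s 0)\<^sup>2) has_real_derivative 2 * max s 0) (at s)"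
proof (cases s "0::real" rule: linorder_cases)
  case less
  have "((\<lambda>s::real. 0) has_real_derivative 2 * max s 0) (at s)"
    using less by simp
  then show ?thesis
    by (rule has_field_derivative_transform_within_open[where S="{..<0}"]) (use less in auto)
next
  case equal
  have "\<forall>\<^sub>F h in at (0::real). ((max (0 + h) 0)\<^sup>2 - (max 0 0)\<^sup>2) / h = max h 0"
    by (intro always_eventually allI) (auto simp: max_def power2_eq_square)
  moreover have "((\<lambda>h::real. max h 0) \<longlongrightarrow> 2 * max 0 0) (at 0)"
    by (intro tendsto_eq_intros) auto
  ultimately show ?thesis
    unfolding equal DERIV_def using tendsto_cong by fastforce
next
  case greater
  have "((\<lambda>s::real. s\<^sup>2) has_real_derivative 2 * max s 0) (at s)"
    using DERIV_pow[of 2 s] greater by simp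
  then show ?thesis
    by (rule has_field_derivative_transform_within_open[where S="{0<..}"]) (use greater in auto)
qed

lemma has_derivative_coord [derivative_intros]:
  "(f has_derivative f') F \<Longrightarrow> ((\<lambda>x. coord \<mu> (f x)) has_derivative (\<lambda>h. coord \<mu> (f' h))) F"
  by (rule bounded_linear.has_derivative[OF bounded_linear_coord])

lemma continuous_on_coord [continuous_intros]:
  "continuous_on S f \<Longrightarrow> continuous_on S (\<lambda>x. coord \<mu> (f x))"
  by (rule bounded_linear.continuous_on[OF bounded_linear_coord])

text \<open>The weight \<open>(max (cone_gap a) 0)\<^sup>2\<close> is a \<open>C\<^sup>1\<close> cut-off of the backward light cone with apex
  \<open>a\<close>.\<close>

definition cone_gap :: "pt \<Rightarrow> pt \<Rightarrow> real" where
  "cone_gap a q = (coord 0 a - coord 0 q)\<^sup>2 - (coord 1 q - coord 1 a)\<^sup>2 - (coord 2 q - coord 2 a)\<^sup>2"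

definition cone_weight :: "pt \<Rightarrow> pt \<Rightarrow> real" where
  "cone_weight a q = (max (cone_gap a q) 0)\<^sup>2"

lemma cone_weight_eq_0: "cone_gap a q \<le> 0 \<Longrightarrow> cone_weight a q = 0"
  by (simp add: cone_weight_def)

lemma has_derivative_cone_weight:
  "(cone_weight a has_derivative (\<lambda>h. 2 * max (cone_gap a q) 0 *
     (2 * (coord 0 q - coord 0 a) * coord 0 h - 2 * (coord 1 q - coord 1 a) * coord 1 h
      - 2 * (coord 2 q - coord 2 a) * coord 2 h))) (at q within S)"
proof -
  have "(cone_gap a has_derivative (\<lambda>h. 2 * (coord 0 q - coord 0 a) * coord 0 h
      - 2 * (coord 1 q - coord 1 a) * coord 1 h - 2 * (coord 2 q - coord 2 a) * coord 2 h)) (at q within S)"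
    unfolding cone_gap_def[abs_def]
    by (auto intro!: derivative_eq_intros simp: fun_eq_iff algebra_simps)
  from has_derivative_compose[OF this
      has_real_derivative_max0_power2[unfolded has_field_derivative_def]]
  show ?thesis by (simp add: cone_weight_def[abs_def] algebra_simps)
qed

lemma pd_cone_weight:
  "q \<in> Hs \<Longrightarrow> pd \<mu> (cone_weight a) q = - 4 * max (cone_gap a q) 0 * eta \<mu> \<mu> * (coord \<mu> q - coord \<mu> a)"
  by (subst pd_eqI[OF _ has_derivative_cone_weight]) (auto simp: coord_def dir_def eta_def algebra_simps)

lemma continuous_on_cone_weight: "continuous_on S (cone_weight a)"
  unfolding cone_weight_def[abs_def] cone_gap_def by (intro continuous_intros)

lemma continuous_on_pd_cone_weight: "continuous_on Hs (pd \<mu> (cone_weight a))"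
proof -
  have "continuous_on Hs (\<lambda>q. - 4 * max (cone_gap a q) 0 * eta \<mu> \<mu> * (coord \<mu> q - coord \<mu> a))"
    unfolding cone_gap_def by (intro continuous_intros)
  then show ?thesis by (rule continuous_on_cong[THEN iffD1, rotated 2]) (simp_all add: pd_cone_weight)
qed

definition cone_current :: "(pt \<Rightarrow> spinor) \<Rightarrow> pt \<Rightarrow> nat \<Rightarrow> pt \<Rightarrow> real" where
  "cone_current \<Phi> a \<mu> q = cone_weight a q * current \<mu> (\<Phi> q)"

lemma
  assumes "smooth_H \<Phi>"
  shows differentiable_on_cone_current: "cone_current \<Phi> a \<mu> differentiable_on Hs"
    and pd_cone_current: "q \<in> Hs \<Longrightarrow> pd \<nu> (cone_current \<Phi> a \<mu>) q
      = pd \<nu> (cone_weight a) q * current \<mu> (\<Phi> q) + cone_weight a q * pd \<nu> (\<lambda>q. current \<mu> (\<Phi> q)) q"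
proof -
  have w: "cone_weight a differentiable (at q within Hs)" for q
    using has_derivative_cone_weight unfolding differentiable_def by blast
  note j = smooth_H_differentiable[OF smooth_H_current[OF assms]]
  show "cone_current \<Phi> a \<mu> differentiable_on Hs"
    unfolding differentiable_on_def cone_current_def[abs_def]
    using differentiable_bounded_bilinear[OF bounded_bilinear_mult w j] by blast
  show "pd \<nu> (cone_current \<Phi> a \<mu>) q
      = pd \<nu> (cone_weight a) q * current \<mu> (\<Phi> q) + cone_weight a q * pd \<nu> (\<lambda>q. current \<mu> (\<Phi> q)) q"
    if "q \<in> Hs"
    unfolding cone_current_def[abs_def] using pd_bounded_bilinear[OF bounded_bilinear_mult that w j[OF that]] .
qed

lemma continuous_on_pd_cone_current:
  assumes "smooth_H \<Phi>" and "\<nu> < 3"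
  shows "continuous_on Hs (pd \<nu> (cone_current \<Phi> a \<mu>))"
proof -
  have "continuous_on Hs (\<lambda>q. pd \<nu> (cone_weight a) q * current \<mu> (\<Phi> q)
      + cone_weight a q * pd \<nu> (\<lambda>q. current \<mu> (\<Phi> q)) q)"
    using smooth_H_continuous_on[OF smooth_H_current[OF assms(1)]]
      smooth_H_continuous_on[OF smooth_H_pd[OF smooth_H_current[OF assms(1)] assms(2)]]
    by (intro continuous_intros continuous_on_pd_cone_weight continuous_on_cone_weight) auto
  then show ?thesis
    by (rule continuous_on_cong[THEN iffD1, rotated 2]) (simp_all add: pd_cone_current[OF assms(1)])
qed

text \<open>The flux of the current through the cone is outgoing: with \<open>j\<close> conserved, the divergence
  reduces to \<open>j\<^sup>\<mu>\<partial>\<^sub>\<mu>w\<close>, which is \<open>\<le> 0\<close> because \<open>j\<close> is causal and \<open>\<partial>w\<close> points into the past cone.\<close>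

lemma cone_current_divergence_nonpos:
  assumes \<Phi>: "smooth_H \<Phi>" and q: "q \<in> Hs" and free: "dirac \<Phi> q = 0" and "coord 0 q \<le> coord 0 a"
  shows "(\<Sum>\<mu><3. pd \<mu> (cone_current \<Phi> a \<mu>) q) \<le> 0"
proof -
  define m where "m = max (cone_gap a q) 0"
  define L where "L = coord 0 a - coord 0 q"
  have "(\<Sum>\<mu><3. pd \<mu> (cone_current \<Phi> a \<mu>) q)
      = - 4 * m * (L * current 0 (\<Phi> q) + (coord 1 q - coord 1 a) * current 1 (\<Phi> q)
          + (coord 2 q - coord 2 a) * current 2 (\<Phi> q))
        + cone_weight a q * (\<Sum>\<mu><3. pd \<mu> (\<lambda>q. current \<mu> (\<Phi> q)) q)"
    by (simp add: pd_cone_current[OF \<Phi> q] pd_cone_weight[OF q] sum_lessThan_3 eta_def m_def L_def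
        algebra_simps)
  also have "\<dots> = - 4 * m * (L * current 0 (\<Phi> q) + (coord 1 q - coord 1 a) * current 1 (\<Phi> q)
          + (coord 2 q - coord 2 a) * current 2 (\<Phi> q))"
    by (simp add: current_conservation[OF \<Phi> q free])
  also have "\<dots> \<le> 0"
  proof (cases "cone_gap a q > 0")
    case True
    then have "(coord 1 q - coord 1 a)\<^sup>2 + (coord 2 q - coord 2 a)\<^sup>2 \<le> L\<^sup>2"
      by (simp add: cone_gap_def L_def)
    from current_causal[OF this] assms(4) have "0 \<le> L * current 0 (\<Phi> q)
        + (coord 1 q - coord 1 a) * current 1 (\<Phi> q) + (coord 2 q - coord 2 a) * current 2 (\<Phi> q)"
      by (simp add: L_def)
    then show ?thesis by (simp add: m_def)
  qed (simp add: m_def)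
  finally show ?thesis .
qed


lemma continuous_on_time_slice:
  assumes "continuous_on Hs G" and "t \<ge> 0"
  shows "continuous_on Z (\<lambda>z. G (t, z))"
  by (rule continuous_on_compose2[OF assms(1)]) (use assms(2) in \<open>auto simp: Hs_def intro!: continuous_intros\<close>)

lemma has_real_derivative_integral_time_slice:
  fixes F :: "pt \<Rightarrow> real"
  assumes F: "F differentiable_on Hs" and F': "continuous_on Hs (pd 0 F)" and t: "t \<in> {0..T}"
  shows "((\<lambda>t. integral (cbox a b) (\<lambda>z. F (t, z))) has_real_derivative
      integral (cbox a b) (\<lambda>z. pd 0 F (t, z))) (at t within {0..T})"
proof (rule leibniz_rule_field_derivative)
  show "((\<lambda>t. F (t, z)) has_real_derivative pd 0 F (t, z)) (at t within {0..T})" if "t \<in> {0..T}" for t z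
  proof -
    obtain x\<^sub>1 x\<^sub>2 where z: "z = (x\<^sub>1, x\<^sub>2)" by fastforce
    have "F differentiable (at (t, x\<^sub>1, x\<^sub>2) within Hs)"
      using F that by (auto simp: differentiable_on_def Hs_def)
    from has_vector_derivative_pd_time[OF this] that show ?thesis
      by (auto simp: z has_real_derivative_iff_has_vector_derivative)
  qed
  show "(\<lambda>z. F (t, z)) integrable_on cbox a b" if "t \<in> {0..T}" for t
    using continuous_on_time_slice[OF differentiable_imp_continuous_on[OF F]] that
    by (auto intro: integrable_continuous)
  show "continuous_on ({0..T} \<times> cbox a b) (\<lambda>(t, z). pd 0 F (t, z))"
    unfolding case_prod_eta by (rule continuous_on_subset[OF F']) (auto simp: Hs_def)
qed (use t in auto)

lemma integral_pd1_eq_0: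
  fixes F :: "pt \<Rightarrow> real"
  assumes F: "F differentiable_on Hs" and F': "continuous_on Hs (pd 1 F)" and "t \<ge> 0"
    and "a\<^sub>1 \<le> b\<^sub>1" and "\<And>x\<^sub>2. F (t, a\<^sub>1, x\<^sub>2) = 0" and "\<And>x\<^sub>2. F (t, b\<^sub>1, x\<^sub>2) = 0"
  shows "integral (cbox (a\<^sub>1, a\<^sub>2) (b\<^sub>1, b\<^sub>2)) (\<lambda>z. pd 1 F (t, z)) = 0"
proof -
  have cont: "continuous_on (cbox (a\<^sub>1, a\<^sub>2) (b\<^sub>1, b\<^sub>2)) (\<lambda>(x\<^sub>1, x\<^sub>2). pd 1 F (t, x\<^sub>1, x\<^sub>2))"
    using continuous_on_time_slice[OF F' \<open>t \<ge> 0\<close>] by (simp add: case_prod_beta)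
  have "integral (cbox a\<^sub>1 b\<^sub>1) (\<lambda>x\<^sub>1. pd 1 F (t, x\<^sub>1, x\<^sub>2)) = 0" for x\<^sub>2
  proof -
    have "((\<lambda>x\<^sub>1. pd 1 F (t, x\<^sub>1, x\<^sub>2)) has_integral F (t, b\<^sub>1, x\<^sub>2) - F (t, a\<^sub>1, x\<^sub>2)) {a\<^sub>1..b\<^sub>1}"
      using assms has_vector_derivative_pd_space1[of F]
      by (intro fundamental_theorem_of_calculus) (auto simp: differentiable_on_def Hs_def)
    then show ?thesis using assms(5,6) by (simp add: integral_unique)
  qed
  then show ?thesis
    using integral_prod_continuous[OF cont] integral_swap_continuous[OF cont] by (simp add: case_prod_beta')
qed

lemma integral_pd2_eq_0:
  fixes F :: "pt \<Rightarrow> real"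
  assumes F: "F differentiable_on Hs" and F': "continuous_on Hs (pd 2 F)" and "t \<ge> 0"
    and "a\<^sub>2 \<le> b\<^sub>2" and "\<And>x\<^sub>1. F (t, x\<^sub>1, a\<^sub>2) = 0" and "\<And>x\<^sub>1. F (t, x\<^sub>1, b\<^sub>2) = 0"
  shows "integral (cbox (a\<^sub>1, a\<^sub>2) (b\<^sub>1, b\<^sub>2)) (\<lambda>z. pd 2 F (t, z)) = 0"
proof -
  have cont: "continuous_on (cbox (a\<^sub>1, a\<^sub>2) (b\<^sub>1, b\<^sub>2)) (\<lambda>(x\<^sub>1, x\<^sub>2). pd 2 F (t, x\<^sub>1, x\<^sub>2))"
    using continuous_on_time_slice[OF F' \<open>t \<ge> 0\<close>] by (simp add: case_prod_beta)
  have "integral (cbox a\<^sub>2 b\<^sub>2) (\<lambda>x\<^sub>2. pd 2 F (t, x\<^sub>1, x\<^sub>2)) = 0" for x\<^sub>1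
  proof -
    have "((\<lambda>x\<^sub>2. pd 2 F (t, x\<^sub>1, x\<^sub>2)) has_integral F (t, x\<^sub>1, b\<^sub>2) - F (t, x\<^sub>1, a\<^sub>2)) {a\<^sub>2..b\<^sub>2}"
      using assms has_vector_derivative_pd_space2[of F]
      by (intro fundamental_theorem_of_calculus) (auto simp: differentiable_on_def Hs_def)
    then show ?thesis using assms(5,6) by (simp add: integral_unique)
  qed
  then show ?thesis using integral_prod_continuous[OF cont] by (simp add: case_prod_beta')
qed

lemma nonpos_derivative_imp_le:
  fixes E E' :: "real \<Rightarrow> real"
  assumes "a \<le> b" and "\<And>t. t \<in> {a..b} \<Longrightarrow> (E has_real_derivative E' t) (at t within {a..b})"
    and "\<And>t. t \<in> {a..b} \<Longrightarrow> E' t \<le> 0"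
  shows "E b \<le> E a"
proof (rule DERIV_nonpos_imp_decreasing_open[OF assms(1)])
  fix t assume "a < t" "t < b"
  then show "\<exists>y. (E has_real_derivative y) (at t) \<and> y \<le> 0"
    using assms(2,3)[of t] at_within_Icc_at[of a t b] by auto
qed (use DERIV_continuous_on assms(2) in blast)


text \<open>Energy in the box around the base of the cone can only decrease: the fluxes through the
  lateral faces vanish, because the weight is zero there.\<close>

lemma cone_energy_derivative_nonpos:
  fixes T y\<^sub>1 y\<^sub>2 :: real
  defines "a \<equiv> (T, y\<^sub>1, y\<^sub>2)" and "B \<equiv> cbox (y\<^sub>1 - T, y\<^sub>2 - T) (y\<^sub>1 + T, y\<^sub>2 + T)"
  assumes \<Phi>: "smooth_H \<Phi>" and free: "\<And>q. q \<in> Hs \<Longrightarrow> dirac \<Phi> q = 0" and t: "0 \<le> t" "t \<le> T"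
  shows "integral B (\<lambda>z. pd 0 (cone_current \<Phi> a 0) (t, z)) \<le> 0"
proof -
  let ?j = "\<lambda>\<mu> z. pd \<mu> (cone_current \<Phi> a \<mu>) (t, z)"
  have int: "?j \<mu> integrable_on B" if "\<mu> < 3" for \<mu>
    unfolding B_def using continuous_on_time_slice[OF continuous_on_pd_cone_current[OF \<Phi> that] t(1)]
    by (rule integrable_continuous)
  have side: "cone_current \<Phi> a \<mu> (t, y\<^sub>1 + s * T, x) = 0" "cone_current \<Phi> a \<mu> (t, x, y\<^sub>2 + s * T) = 0"
    if "s \<in> {-1, 1}" for s x \<mu>
  proof -
    have "(T - t)\<^sup>2 \<le> T\<^sup>2" using t by (intro power_mono) auto
    moreover have "0 \<le> (x - y\<^sub>1)\<^sup>2" "0 \<le> (x - y\<^sub>2)\<^sup>2" by simp_all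
    moreover have "cone_gap a (t, y\<^sub>1 + s * T, x) = (T - t)\<^sup>2 - T\<^sup>2 - (x - y\<^sub>2)\<^sup>2"
      "cone_gap a (t, x, y\<^sub>2 + s * T) = (T - t)\<^sup>2 - (x - y\<^sub>1)\<^sup>2 - T\<^sup>2"
      using that by (auto simp: cone_gap_def a_def coord_def power2_eq_square)
    ultimately have "cone_gap a (t, y\<^sub>1 + s * T, x) \<le> 0" "cone_gap a (t, x, y\<^sub>2 + s * T) \<le> 0"
      by linarith+
    then show "cone_current \<Phi> a \<mu> (t, y\<^sub>1 + s * T, x) = 0" "cone_current \<Phi> a \<mu> (t, x, y\<^sub>2 + s * T) = 0"
      by (simp_all add: cone_current_def cone_weight_eq_0)
  qed
  have "integral B (?j 1) = 0" "integral B (?j 2) = 0"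
    unfolding B_def
    using integral_pd1_eq_0[OF differentiable_on_cone_current[OF \<Phi>] continuous_on_pd_cone_current[OF \<Phi>]]
      integral_pd2_eq_0[OF differentiable_on_cone_current[OF \<Phi>] continuous_on_pd_cone_current[OF \<Phi>]]
      side[of "-1"] side[of 1] t
    by simp_all
  then have "integral B (?j 0) = integral B (\<lambda>z. ?j 0 z + ?j 1 z + ?j 2 z)"
    using int[of 0] int[of 1] int[of 2] by (simp add: integral_add integrable_add)
  also have "\<dots> \<le> integral B (\<lambda>z. 0)"
    using int[of 0] int[of 1] int[of 2] t cone_current_divergence_nonpos[OF \<Phi> _ free]
    by (intro integral_le integrable_add integrable_0) (auto simp: Hs_def a_def coord_def sum_lessThan_3)
  finally show ?thesis by simp
qed

lemma cone_energy_antimono: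
  fixes T y\<^sub>1 y\<^sub>2 :: real
  defines "a \<equiv> (T, y\<^sub>1, y\<^sub>2)" and "B \<equiv> cbox (y\<^sub>1 - T, y\<^sub>2 - T) (y\<^sub>1 + T, y\<^sub>2 + T)"
  assumes \<Phi>: "smooth_H \<Phi>" and free: "\<And>q. q \<in> Hs \<Longrightarrow> dirac \<Phi> q = 0" and t: "0 \<le> t" "t \<le> T"
  shows "integral B (\<lambda>z. cone_current \<Phi> a 0 (t, z)) \<le> integral B (\<lambda>z. cone_current \<Phi> a 0 (0, z))"
proof (rule nonpos_derivative_imp_le[OF t(1)])
  fix s assume s: "s \<in> {0..t}"
  show "((\<lambda>s. integral B (\<lambda>z. cone_current \<Phi> a 0 (s, z))) has_real_derivative
      integral B (\<lambda>z. pd 0 (cone_current \<Phi> a 0) (s, z))) (at s within {0..t})"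
    unfolding B_def
    by (rule has_real_derivative_integral_time_slice[OF differentiable_on_cone_current[OF \<Phi>]
          continuous_on_pd_cone_current[OF \<Phi>] s]) simp
  show "integral B (\<lambda>z. pd 0 (cone_current \<Phi> a 0) (s, z)) \<le> 0"
    using cone_energy_derivative_nonpos[OF \<Phi> free] s t by (simp add: a_def B_def)
qed

lemma free_dirac_zero_data_vanishes:
  assumes \<Phi>: "smooth_H \<Phi>" and free: "\<And>q. q \<in> Hs \<Longrightarrow> dirac \<Phi> q = 0"
    and init: "\<And>x\<^sub>1 x\<^sub>2. \<Phi> (0, x\<^sub>1, x\<^sub>2) = 0" and p: "p \<in> Hs"
  shows "\<Phi> p = 0"
proof -
  obtain t\<^sub>0 y\<^sub>1 y\<^sub>2 where p_eq: "p = (t\<^sub>0, y\<^sub>1, y\<^sub>2)" by (cases p) auto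
  have t\<^sub>0: "0 \<le> t\<^sub>0" using p by (simp add: p_eq Hs_def)
  define T where "T = t\<^sub>0 + 1"
  define a :: pt where "a = (T, y\<^sub>1, y\<^sub>2)"
  define B where "B = cbox (y\<^sub>1 - T, y\<^sub>2 - T) (y\<^sub>1 + T, y\<^sub>2 + T)"
  have nonneg: "0 \<le> cone_current \<Phi> a 0 q" for q
    by (simp add: cone_current_def cone_weight_def current_0_nonneg)
  have cont: "continuous_on B (\<lambda>z. cone_current \<Phi> a 0 (t\<^sub>0, z))"
    by (rule continuous_on_time_slice[OF
          differentiable_imp_continuous_on[OF differentiable_on_cone_current[OF \<Phi>]] t\<^sub>0])
  have "integral B (\<lambda>z. cone_current \<Phi> a 0 (t\<^sub>0, z)) \<le> integral B (\<lambda>z. cone_current \<Phi> a 0 (0, z))"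
    using cone_energy_antimono[OF \<Phi> free t\<^sub>0] by (simp add: a_def B_def T_def)
  also have "\<dots> = 0"
    using init[of "fst z" "snd z" for z] by (simp add: cone_current_def current_def)
  finally have "((\<lambda>z. cone_current \<Phi> a 0 (t\<^sub>0, z)) has_integral 0) B"
    using integral_nonneg[OF integrable_continuous[OF cont[unfolded B_def]]] nonneg
      integrable_continuous[OF cont[unfolded B_def]]
    by (auto simp: B_def has_integral_iff)
  then have "cone_current \<Phi> a 0 p = 0"
    using has_integral_0_cbox_imp_0[OF cont[unfolded B_def] _ _ _, of "(y\<^sub>1, y\<^sub>2)"] t\<^sub>0
    by (auto simp: nonneg B_def p_eq T_def box_ne_empty Basis_prod_def cbox_Pair_eq cbox_interval)
  moreover have "cone_weight a p = 1"
    by (simp add: cone_weight_def cone_gap_def a_def p_eq T_def coord_def)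
  ultimately show ?thesis
    by (simp add: cone_current_def current_0 vec_eq_iff forall_2 add_nonneg_eq_0_iff)
qed


section \<open>The good-derivative form of the minus component\<close>

lemma omega_sq: "rad p \<noteq> 0 \<Longrightarrow> (omega 1 p)\<^sup>2 + (omega 2 p)\<^sup>2 = 1"
proof -
  assume "rad p \<noteq> 0"
  have "(omega 1 p)\<^sup>2 + (omega 2 p)\<^sup>2 = ((coord 1 p)\<^sup>2 + (coord 2 p)\<^sup>2) / (rad p)\<^sup>2"
    unfolding omega_def by (simp add: power_divide add_divide_distrib)
  also have "\<dots> = 1"
    using \<open>rad p \<noteq> 0\<close> unfolding rad_def by simp
  finally show ?thesis .
qed

lemma scaleR_matrix_vector_mult: "(r *\<^sub>R A) *v (x::complex^2) = r *\<^sub>R (A *v x)"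
  by (simp add: vec_eq_iff matrix_vector_mult_def scaleR_sum_right)

text \<open>For a unit vector \<open>\<omega>\<close>, \<open>(I - \<omega>\<^sub>a\<gamma>\<^sup>0\<gamma>\<^sup>a)\<gamma>\<^sup>0 = (I - \<omega>\<^sub>a\<gamma>\<^sup>0\<gamma>\<^sup>a)\<omega>\<^sub>b\<gamma>\<^sup>b\<close>, so the
  \<open>t\<close>-derivative in \<open>\<gamma>\<^sup>\<mu>\<partial>\<^sub>\<mu>\<close> can be absorbed into the good derivatives \<open>\<partial>\<^sub>b + \<omega>\<^sub>b\<partial>\<^sub>t\<close>.\<close>

lemma minus_part_dirac_identity:
  fixes w :: "nat \<Rightarrow> real"
  assumes w: "(w 1)\<^sup>2 + (w 2)\<^sup>2 = 1" and X: "X = (- \<i>) *s (gam 0 *v g 0 + gam 1 *v g 1 + gam 2 *v g 2)"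
  shows "X - (\<Sum>a\<in>{1,2}. w a *\<^sub>R ((gam 0 ** gam a) *v X))
     = - (\<i> *s ((mat 1 - (\<Sum>a\<in>{1,2}. w a *\<^sub>R (gam 0 ** gam a)))
                     *v (\<Sum>b\<in>{1,2}. gam b *v (g b + w b *\<^sub>R g 0))))"
proof -
  have "complex_of_real (w 1) * complex_of_real (w 1) + complex_of_real (w 2) * complex_of_real (w 2) = 1"
    using w by (metis of_real_1 of_real_add of_real_mult power2_eq_square)
  then show ?thesis
    unfolding X
    by (simp add: matrix_vector_mult_diff_rdistrib matrix_vector_mult_add_rdistrib scaleR_matrix_vector_mult
        matrix_vector_mul_assoc[symmetric] gam_mult_vec vec_eq_iff forall_2 scaleR_vec_component
        algebra_simps del: vector_scaleR_component) algebra
qed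

lemma psi_eq_dirac_op_Psi:
  assumes \<psi>: "smooth_H \<psi>" and \<Psi>: "smooth_H \<Psi>"
    and wave_eq: "\<And>p. p \<in> Hs \<Longrightarrow> - Box \<Psi> p = \<i> *s dirac \<psi> p"
    and init0: "\<And>x\<^sub>1 x\<^sub>2. \<Psi> (0, x\<^sub>1, x\<^sub>2) = 0"
    and init1: "\<And>x\<^sub>1 x\<^sub>2. pd 0 \<Psi> (0, x\<^sub>1, x\<^sub>2) = \<i> *s (gam 0 *v \<psi> (0, x\<^sub>1, x\<^sub>2))"
  shows "eq_on_Hs \<psi> (dirac_op \<Psi>)"
proof -
  define \<Phi> where "\<Phi> q = (- \<i>) *s dirac \<Psi> q + (- 1) *s \<psi> q" for q
  have "smooth_H \<Phi>"
    unfolding \<Phi>_def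
    by (intro smooth_H_add smooth_H_bounded_linear[OF bounded_linear_vector_smult] smooth_H_dirac \<Psi> \<psi>)
  moreover have "dirac \<Phi> q = 0" if "q \<in> Hs" for q
    using dirac_linear[OF smooth_H_dirac[OF \<Psi>] \<psi> that, of "- \<i>" "- 1"] dirac_dirac[OF \<Psi> that] wave_eq[OF that]
    by (simp add: \<Phi>_def[abs_def] vec_eq_iff)
  moreover have "\<Phi> (0, x\<^sub>1, x\<^sub>2) = 0" for x\<^sub>1 x\<^sub>2
  proof -
    have "pd \<mu> \<Psi> (0, x\<^sub>1, x\<^sub>2) = 0" if "\<mu> \<in> {1, 2}" for \<mu>
      using that by (intro pd_const_on_ray[where c=0]) (auto simp: Hs_def dir_def init0)
    then show ?thesis
      using init1[of x\<^sub>1 x\<^sub>2] by (simp add: \<Phi>_def dirac_expand vec_eq_iff forall_2 gam_mult_vec)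
  qed
  ultimately have "\<Phi> q = 0" if "q \<in> Hs" for q
    using free_dirac_zero_data_vanishes that by blast
  then show ?thesis
    by (auto simp: eq_on_Hs_def dirac_op_def \<Phi>_def vec_eq_iff)
qed

lemma minus_part_GamI:
  assumes \<psi>: "smooth_H \<psi>" and \<Psi>: "smooth_H \<Psi>" and eq: "eq_on_Hs \<psi> (dirac_op \<Psi>)"
    and p: "p \<in> Hs" and "rad p \<noteq> 0"
  shows "minus_part (GamI I \<psi>) p
     = - (\<i> *s ((mat 1 - (\<Sum>a\<in>{1,2}. omega a p *\<^sub>R (gam 0 ** gam a)))
                     *v (\<Sum>b\<in>{1,2}. gam b *v Gd b (GamI I \<Psi>) p)))"
proof -
  have "GamI I \<psi> p = GamI I (dirac_op \<Psi>) p"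
    using dirac_compatible_GamI eq p unfolding dirac_compatible_def eq_on_Hs_def by blast
  also have "\<dots> = dirac_op (GamI I \<Psi>) p"
    using dirac_compatible_GamI \<Psi> p unfolding dirac_compatible_def eq_on_Hs_def by blast
  finally have "GamI I \<psi> p = (- \<i>) *s (gam 0 *v pd 0 (GamI I \<Psi>) p + gam 1 *v pd 1 (GamI I \<Psi>) p
      + gam 2 *v pd 2 (GamI I \<Psi>) p)"
    by (simp add: dirac_op_def dirac_expand)
  from minus_part_dirac_identity[OF omega_sq[OF \<open>rad p \<noteq> 0\<close>] this]
  show ?thesis unfolding minus_part_def Gd_def .
qed

theorem lemma2p14:
  fixes \<psi> \<Psi> :: "pt \<Rightarrow> spinor" and v :: "pt \<Rightarrow> real"
  assumes smooth: "smooth_H \<psi>" "smooth_H v" "smooth_H \<Psi>"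
    and dirac_eq: "\<And>p. p \<in> Hs \<Longrightarrow> - (\<i> *s dirac \<psi> p) = v p *\<^sub>R \<psi> p"
    and kg_eq: "\<And>p. p \<in> Hs \<Longrightarrow> complex_of_real (- Box v p + v p) = hdot (\<psi> p) (gam 0 *v \<psi> p)"
    and wave_eq: "\<And>p. p \<in> Hs \<Longrightarrow> - Box \<Psi> p = \<i> *s dirac \<psi> p"
    and init0: "\<And>x1 x2. \<Psi> (0, x1, x2) = 0"
    and init1: "\<And>x1 x2. pd 0 \<Psi> (0, x1, x2) = \<i> *s (gam 0 *v \<psi> (0, x1, x2))"
  shows
    "(\<forall>p\<in>Hs.
       - (\<i> *s dirac (\<lambda>q. \<psi> q + \<i> *s dirac (smul v \<psi>) q) p)
         = N1 \<psi> v p + N2 \<psi> p + 2 *\<^sub>R Q0 \<psi> v p)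
   \<and> (\<forall>p\<in>Hs.
       - Box (\<lambda>q. \<Psi> q - v q *\<^sub>R \<psi> q) p
         = - N1 \<psi> v p - N2 \<psi> p - 2 *\<^sub>R Q0 \<psi> v p)
   \<and> (\<forall>p\<in>Hs.
       (let vt = (\<lambda>q. complex_of_real (v q) - hdot (\<psi> q) (gam 0 *v \<psi> q))
        in - Box vt p + vt p = N3 \<psi> v p + N4 \<psi> p))
   \<and> (\<forall>I :: nat \<Rightarrow> nat. \<forall>p\<in>Hs. rad p \<noteq> 0 \<longrightarrow>
       minus_part (GamI I \<psi>) p
         = - (\<i> *s ((mat 1 - (\<Sum>a\<in>{1,2}. omega a p *\<^sub>R (gam 0 ** gam a)))
                     *v (\<Sum>b\<in>{1,2}. gam b *v Gd b (GamI I \<Psi>) p))))"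
proof (intro conjI ballI allI impI)
  fix p assume p: "p \<in> Hs"
  show "- (\<i> *s dirac (\<lambda>q. \<psi> q + \<i> *s dirac (smul v \<psi>) q) p)
    = N1 \<psi> v p + N2 \<psi> p + 2 *\<^sub>R Q0 \<psi> v p"
    by (rule dirac_psi_tilde[OF smooth(2,1) p dirac_eq kg_eq[OF p]])
  show "- Box (\<lambda>q. \<Psi> q - v q *\<^sub>R \<psi> q) p = - N1 \<psi> v p - N2 \<psi> p - 2 *\<^sub>R Q0 \<psi> v p"
    by (rule wave_Psi_tilde[OF smooth(2,1,3) p dirac_eq kg_eq[OF p] wave_eq[OF p]])
  show "let vt = \<lambda>q. complex_of_real (v q) - hdot (\<psi> q) (gam 0 *v \<psi> q)
    in - Box vt p + vt p = N3 \<psi> v p + N4 \<psi> p"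
    by (rule klein_gordon_v_tilde[OF smooth(2,1) p dirac_eq kg_eq[OF p]])
next
  fix I :: "nat \<Rightarrow> nat" and p assume "p \<in> Hs" and "rad p \<noteq> 0"
  with psi_eq_dirac_op_Psi[OF smooth(1,3) wave_eq init0 init1]
  show "minus_part (GamI I \<psi>) p
         = - (\<i> *s ((mat 1 - (\<Sum>a\<in>{1,2}. omega a p *\<^sub>R (gam 0 ** gam a)))
                     *v (\<Sum>b\<in>{1,2}. gam b *v Gd b (GamI I \<Psi>) p)))"
    by (rule minus_part_GamI[OF smooth(1,3)])
qed

end
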